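(* (1) For any $X\in\mathfrak{gl}(V)$, the series $\exp(X)=\sum_{i\ge0}X^i/i!$ defines a well-defined automorphism of $V$ lying in $\mathrm{GL}(V)$; hence there is a map $\mathrm{Exp}:\mathfrak{gl}(V)\to\mathrm{GL}(V)$, $X\mapsto\exp(X)$. (2) The image of $\mathrm{Exp}$ generates the group $\mathrm{GL}(V)$.
   Context: $\Lambda=\varinjlim\Lambda(N)$ is the Grassmann algebra of infinite degree, the direct limit of the exterior algebras $\Lambda(N)=\wedge(\mathbb{C}^N)$, $\mathbb{Z}_2$-graded and supercommutative. $V_{\mathbb{C}}$ is a finite-dimensional $\mathbb{Z}_2$-graded complex vector space and $V=V_{\mathbb{C}}\otimes_{\mathbb{C}}\Lambda$. $\mathrm{GL}(V)$ is the group of invertible even $\Lambda$-linear endomorphisms of $V$, and $\mathfrak{gl}(V)=(\mathrm{End}_{\mathbb{C}}(V_{\mathbb{C}})\otimes_{\mathbb{C}}\Lambda)_{\bar0}$ (the even elements). *)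

theory Defs
  imports Complex_Main "HOL-Algebra.Generated_Groups"
begin

text \<open>An element of Lambda is represented by its coefficients with respect to the
monomial basis e_S = e_s1 ... e_sk (s1 < ... < sk, S a finite set of naturals),
with only finitely many nonzero coefficients. This is exactly the direct limit
of the exterior algebras Lambda(N) = wedge(C^N).\<close>

type_synonym grass = "nat set \<Rightarrow> complex"

definition grass_elems :: "grass set" where
  "grass_elems = {a. finite {S. a S \<noteq> 0} \<and> (\<forall>S. a S \<noteq> 0 \<longrightarrow> finite S)}"

definition gzero :: grass where "gzero = (\<lambda>_. 0)"

definition gone :: grass where "gone = (\<lambda>S. if S = {} then 1 else 0)"

text \<open>Sign of e_S e_T = sign * e_(S union T) for disjoint S, T: number of inversions.\<close>
definition gsign :: "nat set \<Rightarrow> nat set \<Rightarrow> complex" where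
  "gsign S T = (-1) ^ card {(s, t). s \<in> S \<and> t \<in> T \<and> t < s}"

definition gmult :: "grass \<Rightarrow> grass \<Rightarrow> grass" where
  "gmult a b = (\<lambda>U. if finite U then (\<Sum>S\<in>Pow U. gsign S (U - S) * a S * b (U - S)) else 0)"

definition grass_even :: "grass \<Rightarrow> bool" where
  "grass_even a \<longleftrightarrow> a \<in> grass_elems \<and> (\<forall>S. odd (card S) \<longrightarrow> a S = 0)"

definition grass_odd :: "grass \<Rightarrow> bool" where
  "grass_odd a \<longleftrightarrow> a \<in> grass_elems \<and> (\<forall>S. even (card S) \<longrightarrow> a S = 0)"

text \<open>Homogeneous basis indices 0..<p+q; index i is odd iff p \<le> i.
A matrix is a function nat => nat => grass, zero outside (p+q) x (p+q).\<close>

type_synonym gmat = "nat \<Rightarrow> nat \<Rightarrow> grass"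

definition idx_odd :: "nat \<Rightarrow> nat \<Rightarrow> bool" where
  "idx_odd p i \<longleftrightarrow> p \<le> i"

text \<open>Even elements of End(V_C) tensor Lambda.\<close>
definition even_gmat :: "nat \<Rightarrow> nat \<Rightarrow> gmat \<Rightarrow> bool" where
  "even_gmat p q A \<longleftrightarrow>
     (\<forall>i j. if i < p + q \<and> j < p + q
            then (if idx_odd p i = idx_odd p j then grass_even (A i j) else grass_odd (A i j))
            else A i j = gzero)"

definition gl :: "nat \<Rightarrow> nat \<Rightarrow> gmat set" where
  "gl p q = {A. even_gmat p q A}"

definition gmat_mult :: "nat \<Rightarrow> gmat \<Rightarrow> gmat \<Rightarrow> gmat" where
  "gmat_mult n A B = (\<lambda>i j. if i < n \<and> j < n
      then (\<lambda>U. \<Sum>k<n. gmult (A i k) (B k j) U) else gzero)"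

definition gmat_one :: "nat \<Rightarrow> gmat" where
  "gmat_one n = (\<lambda>i j. if i = j \<and> i < n then gone else gzero)"

definition gmat_pow :: "nat \<Rightarrow> gmat \<Rightarrow> nat \<Rightarrow> gmat" where
  "gmat_pow n A k = (gmat_mult n A ^^ k) (gmat_one n)"

text \<open>GL(V): invertible even Lambda-linear endomorphisms of V = V_C tensor Lambda.\<close>
definition GLset :: "nat \<Rightarrow> nat \<Rightarrow> gmat set" where
  "GLset p q = {A. even_gmat p q A \<and>
     (\<exists>B. even_gmat p q B \<and> gmat_mult (p + q) A B = gmat_one (p + q)
                          \<and> gmat_mult (p + q) B A = gmat_one (p + q))}"

definition GLgrp :: "nat \<Rightarrow> nat \<Rightarrow> gmat monoid" where
  "GLgrp p q = \<lparr>carrier = GLset p q, mult = gmat_mult (p + q), one = gmat_one (p + q)\<rparr>"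

definition expsum :: "nat \<Rightarrow> nat \<Rightarrow> gmat \<Rightarrow> nat \<Rightarrow> nat \<Rightarrow> nat \<Rightarrow> nat set \<Rightarrow> complex" where
  "expsum p q X m i j U = (\<Sum>k<m. gmat_pow (p + q) X k i j U / of_nat (fact k))"

definition gexp :: "nat \<Rightarrow> nat \<Rightarrow> gmat \<Rightarrow> gmat" where
  "gexp p q X = (\<lambda>i j U. lim (\<lambda>m. expsum p q X m i j U))"

end

theory Submission
  imports Defs
begin

text \<open>Every coefficient of \<open>X\<^sup>k\<close> indexed by a subset of a finite set \<open>U\<close> is bounded by
  \<open>C\<^sup>k\<close>, where \<open>C\<close> only involves the coefficients of \<open>X\<close> indexed by subsets of \<open>U\<close>; hence the
  exponential series converges absolutely coefficientwise. The Cauchy product together with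
  the binomial identity \<open>(1 - 1)\<^sup>s = 0\<close> for \<open>s > 0\<close> gives \<open>exp X \<cdot> exp (-X) = 1\<close>, and \<open>exp X\<close> is even
  because every \<open>X\<^sup>k\<close> is and all its coefficients live on the finitely many generators of
  \<open>\<Lambda>\<close> occurring in \<open>X\<close>.

  For generation, \<open>exp (a E\<^sub>r\<^sub>c) = 1 + a E\<^sub>r\<^sub>c\<close> whenever \<open>r \<noteq> c\<close> or \<open>a\<^sup>2 = 0\<close>, and
  \<open>exp (z E\<^sub>j\<^sub>j) = 1 + (e\<^sup>z - 1) E\<^sub>j\<^sub>j\<close>; multiplying by these performs row operations.
  Gaussian elimination on the body (the degree-0 part) brings any \<open>A \<in> GL(V)\<close> to a matrix
  with identity body. Then, for \<open>d = 1, 2, \<dots>\<close>, each coefficient of degree \<open>d\<close> is killed by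
  a row operation with a monomial coefficient, which leaves all other coefficients of degree
  at most \<open>d\<close> unchanged. Since only finitely many generators occur in \<open>A\<close>, this ends at
  the identity.\<close>

section \<open>The Grassmann product\<close>

definition inversions :: "nat set \<Rightarrow> nat set \<Rightarrow> nat" where
  "inversions S T = card {(s, t). s \<in> S \<and> t \<in> T \<and> t < s}"

lemma gsign_eq_inversions: "gsign S T = (-1) ^ inversions S T"
  by (simp add: gsign_def inversions_def)

lemma inversions_Un_left:
  assumes "finite S" "finite T" "finite W" "S \<inter> T = {}"
  shows "inversions (S \<union> T) W = inversions S W + inversions T W"
proof -
  have e: "{(s, t). s \<in> S \<union> T \<and> t \<in> W \<and> t < s} =
        {(s, t). s \<in> S \<and> t \<in> W \<and> t < s} \<union> {(s, t). s \<in> T \<and> t \<in> W \<and> t < s}" by auto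
  have f1: "finite {(s, t). s \<in> S \<and> t \<in> W \<and> t < s}"
    by (rule finite_subset[of _ "S \<times> W"]) (use assms in auto)
  have f2: "finite {(s, t). s \<in> T \<and> t \<in> W \<and> t < s}"
    by (rule finite_subset[of _ "T \<times> W"]) (use assms in auto)
  show ?thesis unfolding inversions_def e
    by (rule card_Un_disjoint[OF f1 f2]) (use assms in auto)
qed

lemma inversions_Un_right:
  assumes "finite S" "finite T" "finite W" "T \<inter> W = {}"
  shows "inversions S (T \<union> W) = inversions S T + inversions S W"
proof -
  have e: "{(s, t). s \<in> S \<and> t \<in> T \<union> W \<and> t < s} =
        {(s, t). s \<in> S \<and> t \<in> T \<and> t < s} \<union> {(s, t). s \<in> S \<and> t \<in> W \<and> t < s}" by auto
  have f1: "finite {(s, t). s \<in> S \<and> t \<in> T \<and> t < s}"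
    by (rule finite_subset[of _ "S \<times> T"]) (use assms in auto)
  have f2: "finite {(s, t). s \<in> S \<and> t \<in> W \<and> t < s}"
    by (rule finite_subset[of _ "S \<times> W"]) (use assms in auto)
  show ?thesis unfolding inversions_def e
    by (rule card_Un_disjoint[OF f1 f2]) (use assms in auto)
qed

lemma gsign_cocycle:
  assumes "finite S" "finite T" "finite W" "S \<inter> T = {}" "S \<inter> W = {}" "T \<inter> W = {}"
  shows "gsign S T * gsign (S \<union> T) W = gsign S (T \<union> W) * gsign T W"
  using assms by (simp add: gsign_eq_inversions inversions_Un_left inversions_Un_right power_add)

lemma gsign_empty_left[simp]: "gsign {} T = 1" by (simp add: gsign_def)
lemma gsign_empty_right[simp]: "gsign S {} = 1" by (simp add: gsign_def)

lemma norm_gsign[simp]: "norm (gsign S T) = 1"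
  by (simp add: gsign_def norm_power)

lemma gmult_infinite: "infinite U \<Longrightarrow> gmult a b U = 0"
  by (simp add: gmult_def)

lemma gmult_finite: "finite U \<Longrightarrow> gmult a b U = (\<Sum>S\<in>Pow U. gsign S (U - S) * a S * b (U - S))"
  by (simp add: gmult_def)

lemma gmult_assoc_expand_left:
  assumes U: "finite U"
  shows "gmult (gmult a b) c U = (\<Sum>R\<in>Pow U. \<Sum>T\<in>Pow (U - R).
           gsign R T * gsign (R \<union> T) (U - (R \<union> T)) * a R * b T * c (U - (R \<union> T)))"
    (is "_ = (\<Sum>R\<in>Pow U. \<Sum>T\<in>Pow (U - R). ?g R T)")
proof -
  have "gmult (gmult a b) c U = (\<Sum>S\<in>Pow U. \<Sum>R\<in>{R\<in>Pow U. R \<subseteq> S}. ?g R (S - R))"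
    unfolding gmult_finite[OF U]
  proof (rule sum.cong[OF refl])
    fix S assume S: "S \<in> Pow U"
    hence fS: "finite S" using U finite_subset by auto
    have "gsign S (U - S) * gmult a b S * c (U - S) =
          (\<Sum>R\<in>Pow S. gsign S (U - S) * (gsign R (S - R) * a R * b (S - R)) * c (U - S))"
      using fS by (simp add: gmult_finite sum_distrib_left sum_distrib_right)
    also have "\<dots> = (\<Sum>R\<in>Pow S. ?g R (S - R))"
    proof (rule sum.cong[OF refl])
      fix R assume "R \<in> Pow S"
      hence "R \<union> (S - R) = S" by auto
      thus "gsign S (U - S) * (gsign R (S - R) * a R * b (S - R)) * c (U - S) = ?g R (S - R)"
        by (simp add: ac_simps)
    qed
    also have "Pow S = {R\<in>Pow U. R \<subseteq> S}" using S by auto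
    finally show "gsign S (U - S) * gmult a b S * c (U - S) = (\<Sum>R\<in>{R\<in>Pow U. R \<subseteq> S}. ?g R (S - R))" .
  qed
  also have "\<dots> = (\<Sum>R\<in>Pow U. \<Sum>S\<in>{S\<in>Pow U. R \<subseteq> S}. ?g R (S - R))"
    by (rule sum.swap_restrict) (use U in auto)
  also have "\<dots> = (\<Sum>R\<in>Pow U. \<Sum>T\<in>Pow (U - R). ?g R T)"
  proof (rule sum.cong[OF refl])
    fix R assume R: "R \<in> Pow U"
    show "(\<Sum>S\<in>{S\<in>Pow U. R \<subseteq> S}. ?g R (S - R)) = (\<Sum>T\<in>Pow (U - R). ?g R T)"
      by (rule sum.reindex_bij_witness[where i="\<lambda>T. R \<union> T" and j="\<lambda>S. S - R"]) (use R in auto)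
  qed
  finally show ?thesis .
qed

lemma gmult_assoc_expand_right:
  assumes U: "finite U"
  shows "gmult a (gmult b c) U = (\<Sum>R\<in>Pow U. \<Sum>T\<in>Pow (U - R).
           gsign R T * gsign (R \<union> T) (U - (R \<union> T)) * a R * b T * c (U - (R \<union> T)))"
  unfolding gmult_finite[OF U]
proof (rule sum.cong[OF refl])
  fix R assume R: "R \<in> Pow U"
  have fUR: "finite (U - R)" using U by auto
  have "gsign R (U - R) * a R * gmult b c (U - R) =
       (\<Sum>T\<in>Pow (U - R). gsign R (U - R) * a R * (gsign T (U - R - T) * b T * c (U - R - T)))"
    using fUR by (simp add: gmult_finite sum_distrib_left)
  also have "\<dots> = (\<Sum>T\<in>Pow (U - R).
      gsign R T * gsign (R \<union> T) (U - (R \<union> T)) * a R * b T * c (U - (R \<union> T)))"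
  proof (rule sum.cong[OF refl])
    fix T assume T: "T \<in> Pow (U - R)"
    have fR: "finite R" using R U finite_subset by auto
    have fT: "finite T" using T fUR finite_subset by auto
    have e1: "U - R - T = U - (R \<union> T)" by auto
    have e2: "T \<union> (U - (R \<union> T)) = U - R" using T by auto
    have "gsign R T * gsign (R \<union> T) (U - (R \<union> T)) = gsign R (U - R) * gsign T (U - (R \<union> T))"
      using gsign_cocycle[of R T "U - (R \<union> T)"] fR fT U T e2 by auto
    thus "gsign R (U - R) * a R * (gsign T (U - R - T) * b T * c (U - R - T)) =
        gsign R T * gsign (R \<union> T) (U - (R \<union> T)) * a R * b T * c (U - (R \<union> T))"
      unfolding e1 by (simp add: ac_simps)
  qed
  finally show "gsign R (U - R) * a R * gmult b c (U - R) = (\<Sum>T\<in>Pow (U - R).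
      gsign R T * gsign (R \<union> T) (U - (R \<union> T)) * a R * b T * c (U - (R \<union> T)))" .
qed

lemma gmult_assoc: "gmult (gmult a b) c = gmult a (gmult b c)"
proof
  fix U show "gmult (gmult a b) c U = gmult a (gmult b c) U"
    by (cases "finite U") (simp_all add: gmult_assoc_expand_left gmult_assoc_expand_right gmult_infinite)
qed

text \<open>\<open>gmult\<close> vanishes on infinite index sets, so identities such as \<open>gmult gone a = a\<close>
  only hold for \<open>a\<close> with this property.\<close>

definition gfinite :: "grass \<Rightarrow> bool" where
  "gfinite a \<longleftrightarrow> (\<forall>U. infinite U \<longrightarrow> a U = 0)"

definition ghomog :: "bool \<Rightarrow> grass \<Rightarrow> bool" where
  "ghomog e a \<longleftrightarrow> a \<in> grass_elems \<and> (\<forall>S. even (card S) \<noteq> e \<longrightarrow> a S = 0)"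

lemma grass_even_eq_ghomog: "grass_even a = ghomog True a"
  by (auto simp: grass_even_def ghomog_def)
lemma grass_odd_eq_ghomog: "grass_odd a = ghomog False a"
  by (auto simp: grass_odd_def ghomog_def)

lemma ghomog_gfinite: "ghomog e a \<Longrightarrow> gfinite a"
  by (auto simp: ghomog_def gfinite_def grass_elems_def)

lemma gfinite_gmult[simp]: "gfinite (gmult a b)"
  by (simp add: gfinite_def gmult_infinite)

lemma gmult_add_left: "gmult (\<lambda>U. a U + b U) c = (\<lambda>U. gmult a c U + gmult b c U)"
  by (rule ext) (simp add: gmult_def sum.distrib distrib_left distrib_right)

lemma gmult_sum_left: "gmult (\<lambda>U. \<Sum>k\<in>K. f k U) c = (\<lambda>U. \<Sum>k\<in>K. gmult (f k) c U)"
proof (rule ext)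
  fix U show "gmult (\<lambda>U. \<Sum>k\<in>K. f k U) c U = (\<Sum>k\<in>K. gmult (f k) c U)"
  proof (cases "finite U")
    case True
    have "gmult (\<lambda>U. \<Sum>k\<in>K. f k U) c U = (\<Sum>S\<in>Pow U. \<Sum>k\<in>K. gsign S (U - S) * f k S * c (U - S))"
      unfolding gmult_finite[OF True] by (simp add: sum_distrib_left sum_distrib_right)
    also have "\<dots> = (\<Sum>k\<in>K. \<Sum>S\<in>Pow U. gsign S (U - S) * f k S * c (U - S))"
      by (rule sum.swap)
    finally show ?thesis by (simp add: gmult_finite[OF True])
  qed (simp add: gmult_infinite)
qed

lemma gmult_sum_right: "gmult c (\<lambda>U. \<Sum>k\<in>K. f k U) = (\<lambda>U. \<Sum>k\<in>K. gmult c (f k) U)"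
proof (rule ext)
  fix U show "gmult c (\<lambda>U. \<Sum>k\<in>K. f k U) U = (\<Sum>k\<in>K. gmult c (f k) U)"
  proof (cases "finite U")
    case True
    have "gmult c (\<lambda>U. \<Sum>k\<in>K. f k U) U = (\<Sum>S\<in>Pow U. \<Sum>k\<in>K. gsign S (U - S) * c S * f k (U - S))"
      unfolding gmult_finite[OF True] by (simp add: sum_distrib_left sum_distrib_right)
    also have "\<dots> = (\<Sum>k\<in>K. \<Sum>S\<in>Pow U. gsign S (U - S) * c S * f k (U - S))"
      by (rule sum.swap)
    finally show ?thesis by (simp add: gmult_finite[OF True])
  qed (simp add: gmult_infinite)
qed

lemma gmult_scale_left: "gmult (\<lambda>U. x * a U) b = (\<lambda>U. x * gmult a b U)"
  by (rule ext) (simp add: gmult_def sum_distrib_left mult_ac)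

lemma gmult_scale_right: "gmult a (\<lambda>U. x * b U) = (\<lambda>U. x * gmult a b U)"
  by (rule ext) (simp add: gmult_def sum_distrib_left mult_ac)

lemma gmult_gzero_left[simp]: "gmult gzero b = gzero"
  by (rule ext) (auto simp: gmult_def gzero_def)
lemma gmult_gzero_right[simp]: "gmult b gzero = gzero"
  by (rule ext) (auto simp: gmult_def gzero_def)
lemma gmult_zero_left[simp]: "gmult (\<lambda>_. 0) b = gzero"
  by (rule ext) (auto simp: gmult_def gzero_def)
lemma gmult_zero_right[simp]: "gmult b (\<lambda>_. 0) = gzero"
  by (rule ext) (auto simp: gmult_def gzero_def)

lemma gmult_empty[simp]: "gmult a b {} = a {} * b {}"
  by (simp add: gmult_def)

lemma gmult_gone_left: "gfinite a \<Longrightarrow> gmult gone a = a"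
proof (rule ext)
  fix U assume g: "gfinite a"
  show "gmult gone a U = a U"
  proof (cases "finite U")
    case True
    have "gmult gone a U = (\<Sum>S\<in>Pow U. if S = {} then a U else 0)"
      using True unfolding gmult_finite[OF True] gone_def by (intro sum.cong) auto
    also have "\<dots> = a U" using True by (simp add: sum.delta)
    finally show ?thesis .
  qed (use g in \<open>auto simp: gfinite_def gmult_infinite\<close>)
qed

lemma gmult_gone_right: "gfinite a \<Longrightarrow> gmult a gone = a"
proof (rule ext)
  fix U assume g: "gfinite a"
  show "gmult a gone U = a U"
  proof (cases "finite U")
    case True
    have "gmult a gone U = (\<Sum>S\<in>Pow U. if S = U then a U else 0)"
      using True unfolding gmult_finite[OF True] gone_def by (intro sum.cong) auto
    also have "\<dots> = a U" using True by (simp add: sum.delta)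
    finally show ?thesis .
  qed (use g in \<open>auto simp: gfinite_def gmult_infinite\<close>)
qed

lemma gmult_nonzeroD:
  assumes "gmult a b U \<noteq> 0"
  shows "finite U \<and> (\<exists>S\<subseteq>U. a S \<noteq> 0 \<and> b (U - S) \<noteq> 0)"
proof -
  have f: "finite U" using assms gmult_infinite by blast
  from assms f have "(\<Sum>S\<in>Pow U. gsign S (U - S) * a S * b (U - S)) \<noteq> 0" by (simp add: gmult_finite)
  then obtain S where "S \<in> Pow U" "gsign S (U - S) * a S * b (U - S) \<noteq> 0"
    using sum.not_neutral_contains_not_neutral by blast
  thus ?thesis using f by auto
qed

lemma ghomog_gzero[simp]: "ghomog e gzero"
  by (auto simp: ghomog_def grass_elems_def gzero_def)
lemma ghomog_zero[simp]: "ghomog e (\<lambda>_. 0)"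
  by (auto simp: ghomog_def grass_elems_def)

lemma ghomog_gone[simp]: "ghomog True gone"
proof -
  have "{S. gone S \<noteq> 0} \<subseteq> {{}}" by (auto simp: gone_def)
  hence "finite {S. gone S \<noteq> 0}" using finite_subset by blast
  thus ?thesis by (auto simp: ghomog_def grass_elems_def gone_def)
qed

lemma ghomog_add:
  assumes "ghomog e a" "ghomog e b" shows "ghomog e (\<lambda>U. a U + b U)"
proof -
  have A: "finite {S. a S \<noteq> 0}" "\<forall>S. a S \<noteq> 0 \<longrightarrow> finite S" "\<forall>S. even (card S) \<noteq> e \<longrightarrow> a S = 0"
    using assms(1) unfolding ghomog_def grass_elems_def by blast+
  have B: "finite {S. b S \<noteq> 0}" "\<forall>S. b S \<noteq> 0 \<longrightarrow> finite S" "\<forall>S. even (card S) \<noteq> e \<longrightarrow> b S = 0"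
    using assms(2) unfolding ghomog_def grass_elems_def by blast+
  have "{S. a S + b S \<noteq> 0} \<subseteq> {S. a S \<noteq> 0} \<union> {S. b S \<noteq> 0}" by auto
  moreover have "finite ({S. a S \<noteq> 0} \<union> {S. b S \<noteq> 0})" using A B by blast
  ultimately have F: "finite {S. a S + b S \<noteq> 0}" by (rule finite_subset)
  have G: "\<forall>S. a S + b S \<noteq> 0 \<longrightarrow> finite S" using A(2) B(2) by (metis add.right_neutral add_0)
  have H: "\<forall>S. even (card S) \<noteq> e \<longrightarrow> a S + b S = 0" using A(3) B(3) by simp
  show ?thesis unfolding ghomog_def grass_elems_def using F G H by blast
qed

lemma ghomog_scale:
  assumes "ghomog e a" shows "ghomog e (\<lambda>U. x * a U)"
proof -
  have A: "finite {S. a S \<noteq> 0}" "\<forall>S. a S \<noteq> 0 \<longrightarrow> finite S" "\<forall>S. even (card S) \<noteq> e \<longrightarrow> a S = 0"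
    using assms(1) unfolding ghomog_def grass_elems_def by blast+
  have "{S. x * a S \<noteq> 0} \<subseteq> {S. a S \<noteq> 0}" by auto
  hence F: "finite {S. x * a S \<noteq> 0}" using A(1) by (rule finite_subset)
  have G: "\<forall>S. x * a S \<noteq> 0 \<longrightarrow> finite S" using A(2) by simp
  have H: "\<forall>S. even (card S) \<noteq> e \<longrightarrow> x * a S = 0" using A(3) by simp
  show ?thesis unfolding ghomog_def grass_elems_def using F G H by blast
qed

lemma ghomog_sum:
  assumes "\<And>k. k \<in> K \<Longrightarrow> ghomog e (f k)" shows "ghomog e (\<lambda>U. \<Sum>k\<in>K. f k U)"
  using assms
proof (induction K rule: infinite_finite_induct)
  case (insert x F)
  have "ghomog e (\<lambda>U. f x U + (\<Sum>k\<in>F. f k U))"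
    by (rule ghomog_add) (use insert in auto)
  thus ?case using insert by simp
qed auto

lemma ghomog_gmult:
  assumes a: "ghomog e a" and b: "ghomog f b" shows "ghomog (e = f) (gmult a b)"
proof -
  let ?A = "{S. a S \<noteq> 0}" and ?B = "{S. b S \<noteq> 0}"
  have fA: "finite ?A" and fB: "finite ?B" using a b by (auto simp: ghomog_def grass_elems_def)
  have sub: "{U. gmult a b U \<noteq> 0} \<subseteq> (\<lambda>(S, T). S \<union> T) ` (?A \<times> ?B)"
  proof
    fix U assume "U \<in> {U. gmult a b U \<noteq> 0}"
    then obtain S where "S \<subseteq> U" "a S \<noteq> 0" "b (U - S) \<noteq> 0" using gmult_nonzeroD by blast
    thus "U \<in> (\<lambda>(S, T). S \<union> T) ` (?A \<times> ?B)"
      by (intro image_eqI[of _ _ "(S, U - S)"]) auto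
  qed
  have fin: "finite {U. gmult a b U \<noteq> 0}"
    by (rule finite_subset[OF sub]) (use fA fB in auto)
  have par: "gmult a b U = 0" if "even (card U) \<noteq> (e = f)" for U
  proof (rule ccontr)
    assume "gmult a b U \<noteq> 0"
    then obtain S where S: "finite U" "S \<subseteq> U" "a S \<noteq> 0" "b (U - S) \<noteq> 0" using gmult_nonzeroD by blast
    have "even (card S) = e" "even (card (U - S)) = f" using a b S by (auto simp: ghomog_def)
    moreover have "card U = card S + card (U - S)"
    proof -
      have "finite S" using S finite_subset by blast
      hence "card (U - S) = card U - card S" using S card_Diff_subset by blast
      moreover have "card S \<le> card U" using S card_mono by blast
      ultimately show ?thesis by simp
    qed
    ultimately show False using that by auto
  qed
  have "\<forall>S. gmult a b S \<noteq> 0 \<longrightarrow> finite S" using gmult_nonzeroD by blast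
  thus ?thesis using fin par unfolding ghomog_def grass_elems_def by blast
qed

definition gmat_wf :: "nat \<Rightarrow> gmat \<Rightarrow> bool" where
  "gmat_wf n A \<longleftrightarrow> (\<forall>i j. \<not> (i < n \<and> j < n) \<longrightarrow> A i j = gzero) \<and> (\<forall>i j. gfinite (A i j))"

definition gmat_add :: "gmat \<Rightarrow> gmat \<Rightarrow> gmat" where
  "gmat_add A B = (\<lambda>i j U. A i j U + B i j U)"

definition gmat_scale :: "complex \<Rightarrow> gmat \<Rightarrow> gmat" where
  "gmat_scale x A = (\<lambda>i j U. x * A i j U)"

lemma gmat_mult_entry: "i < n \<Longrightarrow> j < n \<Longrightarrow> gmat_mult n A B i j = (\<lambda>U. \<Sum>k<n. gmult (A i k) (B k j) U)"
  by (simp add: gmat_mult_def)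

lemma gmat_mult_outside: "\<not> (i < n \<and> j < n) \<Longrightarrow> gmat_mult n A B i j = gzero"
  unfolding gmat_mult_def by auto

lemma gfinite_gzero[simp]: "gfinite gzero" by (simp add: gfinite_def gzero_def)
lemma gfinite_gone[simp]: "gfinite gone" by (auto simp: gfinite_def gone_def)

lemma gmat_wf_mult[simp]: "gmat_wf n (gmat_mult n A B)"
  unfolding gmat_wf_def
proof (intro conjI allI impI)
  fix i j assume "\<not> (i < n \<and> j < n)" thus "gmat_mult n A B i j = gzero" by (simp add: gmat_mult_outside)
next
  fix i j show "gfinite (gmat_mult n A B i j)"
    by (cases "i < n \<and> j < n") (simp_all add: gmat_mult_outside gmat_mult_entry gfinite_def gmult_infinite gzero_def)
qed

lemma gmat_wf_one[simp]: "gmat_wf n (gmat_one n)"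
  unfolding gmat_wf_def by (auto simp: gmat_one_def)

lemma gmat_mult_assoc: "gmat_mult n (gmat_mult n A B) C = gmat_mult n A (gmat_mult n B C)"
proof (intro ext)
  fix i j U
  show "gmat_mult n (gmat_mult n A B) C i j U = gmat_mult n A (gmat_mult n B C) i j U"
  proof (cases "i < n \<and> j < n")
    case True
    have "gmat_mult n (gmat_mult n A B) C i j U = (\<Sum>k<n. gmult (\<lambda>U. \<Sum>l<n. gmult (A i l) (B l k) U) (C k j) U)"
      using True by (simp add: gmat_mult_entry)
    also have "\<dots> = (\<Sum>k<n. \<Sum>l<n. gmult (A i l) (gmult (B l k) (C k j)) U)"
      by (simp add: gmult_sum_left gmult_assoc)
    also have "\<dots> = (\<Sum>l<n. \<Sum>k<n. gmult (A i l) (gmult (B l k) (C k j)) U)"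
      by (rule sum.swap)
    also have "\<dots> = gmat_mult n A (gmat_mult n B C) i j U"
      using True by (simp add: gmat_mult_entry gmult_sum_right)
    finally show ?thesis .
  qed (simp add: gmat_mult_outside)
qed

lemma gmat_mult_one_left: "gmat_wf n A \<Longrightarrow> gmat_mult n (gmat_one n) A = A"
proof (intro ext)
  fix i j U assume g: "gmat_wf n A"
  show "gmat_mult n (gmat_one n) A i j U = A i j U"
  proof (cases "i < n \<and> j < n")
    case True
    have "gmat_mult n (gmat_one n) A i j U = (\<Sum>k<n. if k = i then gmult gone (A k j) U else 0)"
      using True unfolding gmat_mult_entry[OF conjunct1[OF True] conjunct2[OF True]]
      by (intro sum.cong) (auto simp: gmat_one_def gzero_def)
    also have "\<dots> = gmult gone (A i j) U" using True by (simp add: sum.delta)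
    also have "\<dots> = A i j U" using g by (simp add: gmat_wf_def gmult_gone_left)
    finally show ?thesis .
  qed (use g in \<open>auto simp: gmat_mult_outside gmat_wf_def\<close>)
qed

lemma gmat_mult_one_right: "gmat_wf n A \<Longrightarrow> gmat_mult n A (gmat_one n) = A"
proof (intro ext)
  fix i j U assume g: "gmat_wf n A"
  show "gmat_mult n A (gmat_one n) i j U = A i j U"
  proof (cases "i < n \<and> j < n")
    case True
    have "gmat_mult n A (gmat_one n) i j U = (\<Sum>k<n. if k = j then gmult (A i k) gone U else 0)"
      using True unfolding gmat_mult_entry[OF conjunct1[OF True] conjunct2[OF True]]
      by (intro sum.cong) (auto simp: gmat_one_def gzero_def)
    also have "\<dots> = gmult (A i j) gone U" using True by (simp add: sum.delta)
    also have "\<dots> = A i j U" using g by (simp add: gmat_wf_def gmult_gone_right)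
    finally show ?thesis .
  qed (use g in \<open>auto simp: gmat_mult_outside gmat_wf_def\<close>)
qed

lemma gmat_mult_add_left: "gmat_mult n (gmat_add A B) C = gmat_add (gmat_mult n A C) (gmat_mult n B C)"
proof (intro ext)
  fix i j U
  show "gmat_mult n (gmat_add A B) C i j U = gmat_add (gmat_mult n A C) (gmat_mult n B C) i j U"
  proof (cases "i < n \<and> j < n")
    case True
    have e: "gmat_add A B i k = (\<lambda>U. A i k U + B i k U)" for k by (simp add: gmat_add_def)
    show ?thesis using True by (simp add: gmat_mult_entry gmat_add_def e gmult_add_left sum.distrib)
  qed (simp add: gmat_mult_outside gmat_add_def gzero_def)
qed

lemma gmat_mult_scale_left: "gmat_mult n (gmat_scale x A) C = gmat_scale x (gmat_mult n A C)"
proof (intro ext)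
  fix i j U
  show "gmat_mult n (gmat_scale x A) C i j U = gmat_scale x (gmat_mult n A C) i j U"
  proof (cases "i < n \<and> j < n")
    case True
    have e: "gmat_scale x A i k = (\<lambda>U. x * A i k U)" for k by (simp add: gmat_scale_def)
    show ?thesis using True by (simp add: gmat_mult_entry gmat_scale_def e gmult_scale_left sum_distrib_left)
  qed (simp add: gmat_mult_outside gmat_scale_def gzero_def)
qed

lemma gmat_mult_scale_right: "gmat_mult n A (gmat_scale x C) = gmat_scale x (gmat_mult n A C)"
proof (intro ext)
  fix i j U
  show "gmat_mult n A (gmat_scale x C) i j U = gmat_scale x (gmat_mult n A C) i j U"
  proof (cases "i < n \<and> j < n")
    case True
    have e: "gmat_scale x C k j = (\<lambda>U. x * C k j U)" for k by (simp add: gmat_scale_def)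
    show ?thesis using True by (simp add: gmat_mult_entry gmat_scale_def e gmult_scale_right sum_distrib_left)
  qed (simp add: gmat_mult_outside gmat_scale_def gzero_def)
qed

lemma gmat_mult_body: "gmat_mult n A B i j {} = (if i < n \<and> j < n then (\<Sum>k<n. A i k {} * B k j {}) else 0)"
  by (simp add: gmat_mult_def gzero_def)

lemma gmat_pow_0[simp]: "gmat_pow n X 0 = gmat_one n"
  by (simp add: gmat_pow_def)

lemma gmat_pow_Suc: "gmat_pow n X (Suc k) = gmat_mult n X (gmat_pow n X k)"
  by (simp add: gmat_pow_def)

lemma gmat_wf_pow[simp]: "gmat_wf n (gmat_pow n X k)"
  by (cases k) (simp_all add: gmat_pow_Suc)

lemma gmat_pow_add: "gmat_mult n (gmat_pow n X a) (gmat_pow n X b) = gmat_pow n X (a + b)"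
  by (induction a) (simp_all add: gmat_mult_one_left gmat_pow_Suc gmat_mult_assoc)

lemma gmat_pow_scale: "gmat_pow n (gmat_scale x X) k = gmat_scale (x ^ k) (gmat_pow n X k)"
proof (induction k)
  case 0 show ?case by (simp add: gmat_scale_def)
next
  case (Suc k)
  have "gmat_pow n (gmat_scale x X) (Suc k) = gmat_scale (x ^ k) (gmat_scale x (gmat_pow n X (Suc k)))"
    using Suc by (simp only: gmat_pow_Suc gmat_mult_scale_left gmat_mult_scale_right)
  thus ?case by (simp add: gmat_scale_def mult_ac)
qed

definition same_parity :: "nat \<Rightarrow> nat \<Rightarrow> nat \<Rightarrow> bool" where
  "same_parity p i j \<longleftrightarrow> (idx_odd p i = idx_odd p j)"

lemma even_gmat_iff:
  "even_gmat p q A \<longleftrightarrow> (\<forall>i j. \<not> (i < p + q \<and> j < p + q) \<longrightarrow> A i j = gzero)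
      \<and> (\<forall>i j. i < p + q \<and> j < p + q \<longrightarrow> ghomog (same_parity p i j) (A i j))"
proof -
  have h: "\<And>c a. (if c then ghomog True a else ghomog False a) = ghomog c a" by simp
  show ?thesis
    unfolding even_gmat_def same_parity_def grass_even_eq_ghomog grass_odd_eq_ghomog h
    by (metis (full_types))
qed

lemma even_gmat_wf: "even_gmat p q A \<Longrightarrow> gmat_wf (p + q) A"
  unfolding even_gmat_iff gmat_wf_def by (metis gfinite_gzero ghomog_gfinite)

lemma even_gmat_ghomog: "even_gmat p q A \<Longrightarrow> i < p + q \<Longrightarrow> j < p + q \<Longrightarrow> ghomog (same_parity p i j) (A i j)"
  unfolding even_gmat_iff by blast

lemma even_gmat_outside: "even_gmat p q A \<Longrightarrow> \<not> (i < p + q \<and> j < p + q) \<Longrightarrow> A i j = gzero"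
  unfolding even_gmat_iff by blast

lemma even_gmat_nonzeroD: "even_gmat p q A \<Longrightarrow> A i j S \<noteq> 0 \<Longrightarrow> i < p + q \<and> j < p + q"
  unfolding even_gmat_iff gzero_def by metis

lemma even_gmat_mult:
  assumes A: "even_gmat p q A" and B: "even_gmat p q B"
  shows "even_gmat p q (gmat_mult (p + q) A B)"
  unfolding even_gmat_iff
proof (intro conjI allI impI)
  fix i j assume "\<not> (i < p + q \<and> j < p + q)"
  thus "gmat_mult (p + q) A B i j = gzero" by (simp add: gmat_mult_outside)
next
  fix i j assume ij: "i < p + q \<and> j < p + q"
  have "ghomog (same_parity p i j) (\<lambda>U. \<Sum>k<p+q. gmult (A i k) (B k j) U)"
  proof (rule ghomog_sum)
    fix k assume "k \<in> {..<p+q}"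
    hence h: "ghomog (same_parity p i k) (A i k)" "ghomog (same_parity p k j) (B k j)"
      using ij even_gmat_ghomog[OF A] even_gmat_ghomog[OF B] by auto
    have "ghomog (same_parity p i k = same_parity p k j) (gmult (A i k) (B k j))" by (rule ghomog_gmult[OF h])
    moreover have "(same_parity p i k = same_parity p k j) = same_parity p i j" by (auto simp: same_parity_def)
    ultimately show "ghomog (same_parity p i j) (gmult (A i k) (B k j))" by simp
  qed
  thus "ghomog (same_parity p i j) (gmat_mult (p + q) A B i j)" using ij by (simp add: gmat_mult_entry)
qed

lemma even_gmat_one: "even_gmat p q (gmat_one (p + q))"
  unfolding even_gmat_iff by (auto simp: gmat_one_def same_parity_def)

lemma even_gmat_pow: "even_gmat p q X \<Longrightarrow> even_gmat p q (gmat_pow (p + q) X k)"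
  by (induction k) (simp_all add: gmat_pow_Suc even_gmat_one even_gmat_mult)

lemma group_GLgrp: "group (GLgrp p q)"
proof (rule groupI)
  let ?n = "p + q"
  fix x y assume x: "x \<in> carrier (GLgrp p q)" and y: "y \<in> carrier (GLgrp p q)"
  from x obtain x' where x': "even_gmat p q x" "even_gmat p q x'" "gmat_mult ?n x x' = gmat_one ?n"
      "gmat_mult ?n x' x = gmat_one ?n" by (auto simp: GLgrp_def GLset_def)
  from y obtain y' where y': "even_gmat p q y" "even_gmat p q y'" "gmat_mult ?n y y' = gmat_one ?n"
      "gmat_mult ?n y' y = gmat_one ?n" by (auto simp: GLgrp_def GLset_def)
  have g: "gmat_wf ?n x'" "gmat_wf ?n y" using x' y' even_gmat_wf by auto
  have "gmat_mult ?n (gmat_mult ?n x y) (gmat_mult ?n y' x') = gmat_one ?n"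
    by (simp add: gmat_mult_assoc, simp add: gmat_mult_assoc[symmetric] y' gmat_mult_one_left g x')
  moreover have "gmat_mult ?n (gmat_mult ?n y' x') (gmat_mult ?n x y) = gmat_one ?n"
    by (simp add: gmat_mult_assoc, simp add: gmat_mult_assoc[symmetric] y' gmat_mult_one_left g x')
  ultimately show "x \<otimes>\<^bsub>GLgrp p q\<^esub> y \<in> carrier (GLgrp p q)"
    using x' y' by (auto simp: GLgrp_def GLset_def even_gmat_mult intro!: exI[of _ "gmat_mult ?n y' x'"])
next
  show "\<one>\<^bsub>GLgrp p q\<^esub> \<in> carrier (GLgrp p q)"
    using gmat_mult_one_left[OF gmat_wf_one] by (auto simp: GLgrp_def GLset_def even_gmat_one intro!: exI[of _ "gmat_one (p+q)"])
next
  fix x y z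
  show "x \<otimes>\<^bsub>GLgrp p q\<^esub> y \<otimes>\<^bsub>GLgrp p q\<^esub> z = x \<otimes>\<^bsub>GLgrp p q\<^esub> (y \<otimes>\<^bsub>GLgrp p q\<^esub> z)"
    by (simp add: GLgrp_def gmat_mult_assoc)
next
  fix x assume "x \<in> carrier (GLgrp p q)"
  thus "\<one>\<^bsub>GLgrp p q\<^esub> \<otimes>\<^bsub>GLgrp p q\<^esub> x = x"
    by (auto simp: GLgrp_def GLset_def gmat_mult_one_left even_gmat_wf)
next
  fix x assume x: "x \<in> carrier (GLgrp p q)"
  from x obtain x' where x': "even_gmat p q x" "even_gmat p q x'" "gmat_mult (p+q) x x' = gmat_one (p+q)"
      "gmat_mult (p+q) x' x = gmat_one (p+q)" by (auto simp: GLgrp_def GLset_def)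
  hence "x' \<in> carrier (GLgrp p q)" by (auto simp: GLgrp_def GLset_def)
  thus "\<exists>y\<in>carrier (GLgrp p q). y \<otimes>\<^bsub>GLgrp p q\<^esub> x = \<one>\<^bsub>GLgrp p q\<^esub>"
    using x' by (auto simp: GLgrp_def)
qed

section \<open>Convergence of the exponential series\<close>

lemma norm_gmult_le:
  assumes "finite V" "\<And>T. T \<subseteq> V \<Longrightarrow> norm (b T) \<le> B"
  shows "norm (gmult a b V) \<le> (\<Sum>S\<in>Pow V. norm (a S)) * B"
proof -
  have "norm (gmult a b V) \<le> (\<Sum>S\<in>Pow V. norm (gsign S (V - S) * a S * b (V - S)))"
    unfolding gmult_finite[OF assms(1)] by (rule norm_sum)
  also have "\<dots> \<le> (\<Sum>S\<in>Pow V. norm (a S) * B)"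
  proof (rule sum_mono)
    fix S assume "S \<in> Pow V"
    have "norm (gsign S (V - S) * a S * b (V - S)) = norm (a S) * norm (b (V - S))"
      by (simp add: norm_mult)
    also have "\<dots> \<le> norm (a S) * B" by (rule mult_left_mono) (use assms(2) in auto)
    finally show "norm (gsign S (V - S) * a S * b (V - S)) \<le> norm (a S) * B" .
  qed
  also have "\<dots> = (\<Sum>S\<in>Pow V. norm (a S)) * B" by (simp add: sum_distrib_right)
  finally show ?thesis .
qed

lemma norm_gmat_pow_le:
  fixes n :: nat and X :: gmat and U :: "nat set"
  assumes U: "finite U"
  defines "C \<equiv> (\<Sum>i<n. \<Sum>j<n. \<Sum>S\<in>Pow U. norm (X i j S)) + 1"
  shows "V \<subseteq> U \<Longrightarrow> norm (gmat_pow n X k i j V) \<le> C ^ k"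
proof (induction k arbitrary: i j V)
  case 0
  show ?case by (simp add: gmat_one_def gone_def gzero_def)
next
  case (Suc k)
  have C0: "C \<ge> 1" unfolding C_def by (simp add: sum_nonneg)
  show ?case
  proof (cases "i < n \<and> j < n")
    case False
    thus ?thesis using C0 by (simp add: gmat_pow_Suc gmat_mult_outside gzero_def)
  next
    case True
    have fV: "finite V" using Suc.prems U finite_subset by blast
    have "norm (gmat_pow n X (Suc k) i j V) = norm (\<Sum>l<n. gmult (X i l) (gmat_pow n X k l j) V)"
      using True by (simp add: gmat_pow_Suc gmat_mult_entry)
    also have "\<dots> \<le> (\<Sum>l<n. norm (gmult (X i l) (gmat_pow n X k l j) V))" by (rule norm_sum)
    also have "\<dots> \<le> (\<Sum>l<n. (\<Sum>S\<in>Pow U. norm (X i l S)) * C ^ k)"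
    proof (rule sum_mono)
      fix l assume "l \<in> {..<n}"
      have "norm (gmult (X i l) (gmat_pow n X k l j) V) \<le> (\<Sum>S\<in>Pow V. norm (X i l S)) * C ^ k"
        by (rule norm_gmult_le[OF fV]) (use Suc.IH Suc.prems in auto)
      also have "\<dots> \<le> (\<Sum>S\<in>Pow U. norm (X i l S)) * C ^ k"
        by (rule mult_right_mono, rule sum_mono2) (use U Suc.prems C0 in auto)
      finally show "norm (gmult (X i l) (gmat_pow n X k l j) V) \<le> (\<Sum>S\<in>Pow U. norm (X i l S)) * C ^ k" .
    qed
    also have "\<dots> = (\<Sum>l<n. \<Sum>S\<in>Pow U. norm (X i l S)) * C ^ k" by (simp add: sum_distrib_right)
    also have "\<dots> \<le> C * C ^ k"
    proof (rule mult_right_mono)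
      have "(\<Sum>l<n. \<Sum>S\<in>Pow U. norm (X i l S)) \<le> (\<Sum>i<n. \<Sum>l<n. \<Sum>S\<in>Pow U. norm (X i l S))"
        by (rule member_le_sum[where f="\<lambda>i. \<Sum>l<n. \<Sum>S\<in>Pow U. norm (X i l S)"])
           (use True in \<open>auto intro!: sum_nonneg\<close>)
      thus "(\<Sum>l<n. \<Sum>S\<in>Pow U. norm (X i l S)) \<le> C" unfolding C_def by simp
    qed (use C0 in simp)
    finally show ?thesis by simp
  qed
qed

lemma gmat_pow_infinite: "infinite U \<Longrightarrow> gmat_pow n X k i j U = 0"
  using gmat_wf_pow[of n X k] unfolding gmat_wf_def gfinite_def by blast

lemma summable_norm_exp_entry:
  "summable (\<lambda>k. norm (gmat_pow n X k i j U / of_nat (fact k)))"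
proof (cases "finite U")
  case True
  define C where "C = (\<Sum>i<n. \<Sum>j<n. \<Sum>S\<in>Pow U. norm (X i j S)) + 1"
  show ?thesis
  proof (rule summable_comparison_test)
    show "\<exists>N. \<forall>k\<ge>N. norm (norm (gmat_pow n X k i j U / of_nat (fact k))) \<le> inverse (fact k) * C ^ k"
    proof (intro exI allI impI)
      fix k :: nat
      have "norm (gmat_pow n X k i j U) \<le> C ^ k" unfolding C_def by (rule norm_gmat_pow_le[OF True]) simp
      hence "norm (gmat_pow n X k i j U) / fact k \<le> C ^ k / fact k"
        by (simp add: divide_right_mono)
      thus "norm (norm (gmat_pow n X k i j U / of_nat (fact k))) \<le> inverse (fact k) * C ^ k"
        by (simp add: norm_divide field_simps)
    qed
    show "summable (\<lambda>k. inverse (fact k) * C ^ k)" by (rule summable_exp)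
  qed
next
  case False thus ?thesis by (simp add: gmat_pow_infinite)
qed

lemma summable_exp_entry: "summable (\<lambda>k. gmat_pow n X k i j U / of_nat (fact k))"
  by (rule summable_norm_cancel[OF summable_norm_exp_entry])

lemma expsum_LIMSEQ:
  "(\<lambda>m. expsum p q X m i j U) \<longlonglongrightarrow> (\<Sum>k. gmat_pow (p+q) X k i j U / of_nat (fact k))"
  unfolding expsum_def by (rule summable_LIMSEQ[OF summable_exp_entry])

lemma expsum_convergent: "convergent (\<lambda>m. expsum p q X m i j U)"
  using expsum_LIMSEQ convergentI by blast

lemma gexp_eq_suminf: "gexp p q X i j U = (\<Sum>k. gmat_pow (p+q) X k i j U / of_nat (fact k))"
  unfolding gexp_def using expsum_LIMSEQ limI by blast

lemma gexp_sums: "(\<lambda>k. gmat_pow (p+q) X k i j U / of_nat (fact k)) sums gexp p q X i j U"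
  unfolding gexp_eq_suminf using summable_exp_entry summable_sums by blast

lemma sum_alternating_inverse_fact:
  "(\<Sum>a\<le>s. (-1) ^ (s - a) / (fact a * fact (s - a)) :: complex) = (if s = 0 then 1 else 0)"
proof -
  have "(0::complex) ^ s = (1 + (-1)) ^ s" by simp
  also have "\<dots> = (\<Sum>a\<le>s. of_nat (s choose a) * 1 ^ a * (-1) ^ (s - a))" by (rule binomial_ring)
  also have "\<dots> = (\<Sum>a\<le>s. fact s * ((-1) ^ (s - a) / (fact a * fact (s - a))))"
    by (intro sum.cong refl) (simp add: binomial_fact)
  also have "\<dots> = fact s * (\<Sum>a\<le>s. (-1) ^ (s - a) / (fact a * fact (s - a)))"
    by (simp add: sum_distrib_left)
  finally have "(\<Sum>a\<le>s. (-1) ^ (s - a) / (fact a * fact (s - a)) :: complex) = 0 ^ s / fact s"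
    by (simp add: field_simps)
  thus ?thesis by simp
qed

lemma gmat_mult_entry_finite:
  assumes "i < n" "j < n" "finite U"
  shows "gmat_mult n A B i j U = (\<Sum>k<n. \<Sum>S\<in>Pow U. gsign S (U - S) * A i k S * B k j (U - S))"
  using assms by (simp add: gmat_mult_entry gmult_finite)

lemma gmat_pow_mult_pow_neg:
  "gmat_mult n (gmat_pow n X a) (gmat_pow n (gmat_scale (-1) X) b) = gmat_scale ((-1) ^ b) (gmat_pow n X (a + b))"
  by (simp add: gmat_pow_scale gmat_mult_scale_right gmat_pow_add)

lemma gmat_mult_entry_trivial:
  "\<not> (i < n \<and> j < n \<and> finite U) \<Longrightarrow> gmat_mult n A B i j U = 0"
  by (auto simp: gmat_mult_def gmult_infinite gzero_def)

lemma gmat_mult_gexp_sums: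
  fixes p q :: nat and X Y :: gmat
  defines "n \<equiv> p + q"
  shows "(\<lambda>s. \<Sum>a\<le>s. gmat_mult n (gmat_pow n X a) (gmat_pow n Y (s - a)) i j U
                       / (fact a * fact (s - a)))
           sums gmat_mult n (gexp p q X) (gexp p q Y) i j U"
proof (cases "i < n \<and> j < n \<and> finite U")
  case False
  thus ?thesis by (simp add: gmat_mult_entry_trivial)
next
  case True
  hence ij: "i < n" "j < n" and fU: "finite U" by auto
  define f where "f k S a = gmat_pow n X a i k S / of_nat (fact a)" for k S a
  define g where "g k S b = gmat_pow n Y b k j (U - S) / of_nat (fact b)" for k S b
  have cauchy: "(\<lambda>s. \<Sum>a\<le>s. f k S a * g k S (s - a)) sums (gexp p q X i k S * gexp p q Y k j (U - S))"
    for k S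
  proof -
    have "(\<lambda>s. \<Sum>a\<le>s. f k S a * g k S (s - a)) sums ((\<Sum>a. f k S a) * (\<Sum>b. g k S b))"
      unfolding f_def g_def by (rule Cauchy_product_sums) (rule summable_norm_exp_entry)+
    thus ?thesis by (simp add: f_def g_def gexp_eq_suminf n_def)
  qed
  have "(\<lambda>s. \<Sum>k<n. \<Sum>S\<in>Pow U. gsign S (U - S) * (\<Sum>a\<le>s. f k S a * g k S (s - a)))
          sums (\<Sum>k<n. \<Sum>S\<in>Pow U. gsign S (U - S) * (gexp p q X i k S * gexp p q Y k j (U - S)))"
    by (intro sums_sum sums_mult cauchy)
  moreover have "(\<Sum>k<n. \<Sum>S\<in>Pow U. gsign S (U - S) * (\<Sum>a\<le>s. f k S a * g k S (s - a)))
      = (\<Sum>a\<le>s. gmat_mult n (gmat_pow n X a) (gmat_pow n Y (s - a)) i j U / (fact a * fact (s - a)))"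
    for s
  proof -
    have "(\<Sum>k<n. \<Sum>S\<in>Pow U. gsign S (U - S) * (\<Sum>a\<le>s. f k S a * g k S (s - a)))
        = (\<Sum>a\<le>s. \<Sum>k<n. \<Sum>S\<in>Pow U. gsign S (U - S) * (f k S a * g k S (s - a)))"
      by (simp add: sum_distrib_left sum.swap[where B = "{..s}"])
    also have "\<dots> = (\<Sum>a\<le>s. gmat_mult n (gmat_pow n X a) (gmat_pow n Y (s - a)) i j U
                               / (fact a * fact (s - a)))"
      using ij fU by (simp add: gmat_mult_entry_finite f_def g_def sum_divide_distrib mult.assoc)
    finally show ?thesis .
  qed
  moreover have "(\<Sum>k<n. \<Sum>S\<in>Pow U. gsign S (U - S) * (gexp p q X i k S * gexp p q Y k j (U - S)))
      = gmat_mult n (gexp p q X) (gexp p q Y) i j U"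
    using ij fU by (simp add: gmat_mult_entry_finite mult.assoc)
  ultimately show ?thesis by simp
qed

lemma gexp_mult_gexp_neg:
  "gmat_mult (p + q) (gexp p q X) (gexp p q (gmat_scale (-1) X)) = gmat_one (p + q)"
proof (intro ext)
  fix i j U
  let ?n = "p + q"
  have "(\<Sum>a\<le>s. gmat_mult ?n (gmat_pow ?n X a) (gmat_pow ?n (gmat_scale (-1) X) (s - a)) i j U
                 / (fact a * fact (s - a)))
        = (if s = 0 then gmat_one ?n i j U else 0)" for s
  proof -
    have "(\<Sum>a\<le>s. gmat_mult ?n (gmat_pow ?n X a) (gmat_pow ?n (gmat_scale (-1) X) (s - a)) i j U
                 / (fact a * fact (s - a)))
        = (\<Sum>a\<le>s. gmat_pow ?n X s i j U * ((-1) ^ (s - a) / (fact a * fact (s - a))))"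
    proof (rule sum.cong[OF refl])
      fix a assume "a \<in> {..s}"
      hence "a + (s - a) = s" by simp
      thus "gmat_mult ?n (gmat_pow ?n X a) (gmat_pow ?n (gmat_scale (-1) X) (s - a)) i j U
              / (fact a * fact (s - a))
          = gmat_pow ?n X s i j U * ((-1) ^ (s - a) / (fact a * fact (s - a)))"
        unfolding gmat_pow_mult_pow_neg by (simp add: gmat_scale_def)
    qed
    also have "\<dots> = gmat_pow ?n X s i j U * (if s = 0 then 1 else 0)"
      by (simp only: sum_distrib_left[symmetric] sum_alternating_inverse_fact)
    finally show ?thesis by simp
  qed
  moreover have "(\<lambda>s. if s = 0 then gmat_one ?n i j U else 0) sums gmat_one ?n i j U"
    using sums_single[of 0 "\<lambda>_. gmat_one ?n i j U"] by simp
  ultimately show "gmat_mult ?n (gexp p q X) (gexp p q (gmat_scale (-1) X)) i j U = gmat_one ?n i j U"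
    using gmat_mult_gexp_sums[of p q X "gmat_scale (-1) X" i j U] sums_unique2 by fastforce
qed

definition gmat_generators :: "nat \<Rightarrow> gmat \<Rightarrow> nat set" where
  "gmat_generators n X = \<Union>{S. \<exists>i<n. \<exists>j<n. X i j S \<noteq> 0}"

lemma gmat_pow_support:
  "gmat_pow n X k i j V \<noteq> 0 \<Longrightarrow> V \<subseteq> gmat_generators n X"
proof (induction k arbitrary: i j V)
  case 0
  hence "i = j \<and> V = {}" by (simp add: gmat_one_def gone_def gzero_def split: if_splits)
  thus ?case by simp
next
  case (Suc k)
  have ij: "i < n \<and> j < n"
  proof (rule ccontr)
    assume "\<not> (i < n \<and> j < n)"
    thus False using Suc.prems by (simp add: gmat_pow_Suc gmat_mult_outside gzero_def)
  qed
  hence "(\<Sum>l<n. gmult (X i l) (gmat_pow n X k l j) V) \<noteq> 0"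
    using Suc.prems by (simp add: gmat_pow_Suc gmat_mult_entry)
  then obtain l where l: "l < n" "gmult (X i l) (gmat_pow n X k l j) V \<noteq> 0"
    using sum.not_neutral_contains_not_neutral by blast
  from gmult_nonzeroD[OF l(2)] obtain S
    where S: "S \<subseteq> V" "X i l S \<noteq> 0" "gmat_pow n X k l j (V - S) \<noteq> 0"
    by blast
  have "S \<subseteq> gmat_generators n X" using S(2) ij l(1) by (auto simp: gmat_generators_def)
  moreover have "V - S \<subseteq> gmat_generators n X" by (rule Suc.IH[OF S(3)])
  ultimately show ?case by blast
qed

lemma finite_gmat_generators:
  assumes Xe: "even_gmat p q X"
  shows "finite (gmat_generators (p + q) X)"
proof -
  have h: "finite {S. X i j S \<noteq> 0} \<and> (\<forall>S. X i j S \<noteq> 0 \<longrightarrow> finite S)"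
    if "i < p + q" "j < p + q" for i j
    using even_gmat_ghomog[OF Xe that] unfolding ghomog_def grass_elems_def by blast
  have "{S. \<exists>i<p+q. \<exists>j<p+q. X i j S \<noteq> 0} = (\<Union>i<p+q. \<Union>j<p+q. {S. X i j S \<noteq> 0})"
    by blast
  also have "finite \<dots>"
    using h by (intro finite_UN_I finite_lessThan) blast+
  finally show ?thesis
    unfolding gmat_generators_def by (rule finite_Union) (use h in blast)
qed

definition gmat_support_in :: "nat set \<Rightarrow> gmat \<Rightarrow> bool" where
  "gmat_support_in F A \<longleftrightarrow> (\<forall>i j S. A i j S \<noteq> 0 \<longrightarrow> S \<subseteq> F)"

lemma gmat_support_in_generators:
  assumes Xe: "even_gmat p q X"
  shows "gmat_support_in (gmat_generators (p + q) X) X"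
  unfolding gmat_support_in_def
proof (intro allI impI)
  fix i j S assume nz: "X i j S \<noteq> 0"
  hence "i < p + q \<and> j < p + q" by (rule even_gmat_nonzeroD[OF Xe])
  thus "S \<subseteq> gmat_generators (p + q) X" using nz by (auto simp: gmat_generators_def)
qed

lemma ghomog_suminf:
  assumes hom: "\<And>k. ghomog e (f k)" and F: "finite F" and supp: "\<And>k S. f k S \<noteq> 0 \<Longrightarrow> S \<subseteq> F"
  shows "ghomog e (\<lambda>S. \<Sum>k. f k S)"
proof -
  have nz: "\<exists>k. f k S \<noteq> 0" if "(\<Sum>k. f k S) \<noteq> 0" for S
    using that by (rule contrapos_np) simp
  have sub: "{S. (\<Sum>k. f k S) \<noteq> 0} \<subseteq> Pow F" using nz supp by blast
  hence "finite {S. (\<Sum>k. f k S) \<noteq> 0}" using F by (simp add: finite_subset)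
  moreover have "finite S" if "(\<Sum>k. f k S) \<noteq> 0" for S
    using sub that F finite_subset by blast
  moreover have "(\<Sum>k. f k S) = 0" if "even (card S) \<noteq> e" for S
    using hom that by (simp add: ghomog_def)
  ultimately show ?thesis unfolding ghomog_def grass_elems_def by blast
qed

lemma even_gmat_gexp:
  assumes X: "X \<in> gl p q" shows "even_gmat p q (gexp p q X)"
  unfolding even_gmat_iff
proof (intro conjI allI impI)
  let ?n = "p + q"
  have Xe: "even_gmat p q X" using X by (simp add: gl_def)
  have gexp_entry: "gexp p q X i j = (\<lambda>U. \<Sum>k. inverse (fact k) * gmat_pow ?n X k i j U)" for i j
    by (simp add: fun_eq_iff gexp_eq_suminf divide_inverse mult.commute)
  fix i j
  {
    assume "\<not> (i < ?n \<and> j < ?n)"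
    hence "gmat_pow ?n X k i j = gzero" for k
      by (rule even_gmat_outside[OF even_gmat_pow[OF Xe]])
    thus "gexp p q X i j = gzero" by (simp add: gexp_entry gzero_def)
  next
    assume ij: "i < ?n \<and> j < ?n"
    show "ghomog (same_parity p i j) (gexp p q X i j)"
      unfolding gexp_entry
    proof (rule ghomog_suminf[OF _ finite_gmat_generators[OF Xe]])
      show "ghomog (same_parity p i j) (\<lambda>U. inverse (fact k) * gmat_pow ?n X k i j U)" for k
        using ij by (intro ghomog_scale even_gmat_ghomog[OF even_gmat_pow[OF Xe]]) auto
      show "S \<subseteq> gmat_generators ?n X" if "inverse (fact k) * gmat_pow ?n X k i j S \<noteq> 0" for k S
        using that by (simp add: gmat_pow_support)
    qed
  }
qed

lemma ghomog_uminus: "ghomog e a \<Longrightarrow> ghomog e (\<lambda>U. - a U)"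
  using ghomog_scale[of e a "-1"] by simp

lemma gl_uminus: "X \<in> gl p q \<Longrightarrow> gmat_scale (-1) X \<in> gl p q"
  unfolding gl_def even_gmat_iff gmat_scale_def
  by (auto simp: gzero_def intro: ghomog_uminus)

lemma gmat_scale_neg_neg[simp]: "gmat_scale (-1) (gmat_scale (-1) X) = X"
  by (simp add: gmat_scale_def)

lemma gexp_in_GL:
  assumes X: "X \<in> gl p q" shows "gexp p q X \<in> carrier (GLgrp p q)"
proof -
  have e1: "even_gmat p q (gexp p q X)" by (rule even_gmat_gexp[OF X])
  have e2: "even_gmat p q (gexp p q (gmat_scale (-1) X))" by (rule even_gmat_gexp[OF gl_uminus[OF X]])
  have i1: "gmat_mult (p + q) (gexp p q X) (gexp p q (gmat_scale (-1) X)) = gmat_one (p + q)"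
    by (rule gexp_mult_gexp_neg)
  have i2: "gmat_mult (p + q) (gexp p q (gmat_scale (-1) X)) (gexp p q X) = gmat_one (p + q)"
    using gexp_mult_gexp_neg[of p q "gmat_scale (-1) X"] by (simp only: gmat_scale_neg_neg)
  have "gexp p q X \<in> GLset p q"
    unfolding GLset_def mem_Collect_eq
    by (rule conjI[OF e1 exI[of _ "gexp p q (gmat_scale (-1) X)"]]) (intro conjI e2 i1 i2)
  thus ?thesis by (simp add: GLgrp_def)
qed

section \<open>Exponentials of elementary matrices\<close>

definition gmat_elem :: "nat \<Rightarrow> nat \<Rightarrow> grass \<Rightarrow> gmat" where
  "gmat_elem r c a = (\<lambda>k l. if k = r \<and> l = c then a else gzero)"

definition gconst :: "complex \<Rightarrow> grass" where
  "gconst x = (\<lambda>S. if S = {} then x else 0)"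

lemma gfinite_gconst[simp]: "gfinite (gconst x)" by (auto simp: gfinite_def gconst_def)

lemma ghomog_gconst[simp]: "ghomog True (gconst x)"
proof -
  have "{S. gconst x S \<noteq> 0} \<subseteq> {{}}" by (auto simp: gconst_def)
  hence "finite {S. gconst x S \<noteq> 0}" using finite_subset by blast
  thus ?thesis by (auto simp: ghomog_def grass_elems_def gconst_def)
qed

lemma gmult_gconst: "gfinite b \<Longrightarrow> gmult (gconst x) b = (\<lambda>U. x * b U)"
proof (rule ext)
  fix U assume g: "gfinite b"
  show "gmult (gconst x) b U = x * b U"
  proof (cases "finite U")
    case True
    have "gmult (gconst x) b U = (\<Sum>S\<in>Pow U. if S = {} then x * b U else 0)"
      unfolding gmult_finite[OF True] gconst_def by (intro sum.cong) auto
    also have "\<dots> = x * b U" using True by (simp add: sum.delta)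
    finally show ?thesis .
  qed (use g in \<open>auto simp: gfinite_def gmult_infinite\<close>)
qed

lemma gmult_gconst_gconst: "gmult (gconst x) (gconst y) = gconst (x * y)"
  by (simp add: gmult_gconst) (auto simp: gconst_def)

lemma gmat_mult_elem:
  assumes "r < n" "c < n"
  shows "gmat_mult n (gmat_elem r c a) B = (\<lambda>k l. if k = r \<and> l < n then gmult a (B c l) else gzero)"
proof (intro ext)
  fix k l U
  show "gmat_mult n (gmat_elem r c a) B k l U = (if k = r \<and> l < n then gmult a (B c l) else gzero) U"
  proof (cases "k < n \<and> l < n")
    case True
    have "gmat_mult n (gmat_elem r c a) B k l U = (\<Sum>m<n. if m = c then (if k = r then gmult a (B c l) U else 0) else 0)"
      unfolding gmat_mult_entry[OF conjunct1[OF True] conjunct2[OF True]]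
      by (intro sum.cong refl) (auto simp: gmat_elem_def gzero_def)
    also have "\<dots> = (if k = r then gmult a (B c l) U else 0)" using assms by (simp add: sum.delta)
    finally show ?thesis using True by (simp add: gzero_def)
  qed (use assms in \<open>auto simp: gmat_mult_outside\<close>)
qed

lemma gmat_wf_elem: "r < n \<Longrightarrow> c < n \<Longrightarrow> gfinite a \<Longrightarrow> gmat_wf n (gmat_elem r c a)"
  by (auto simp: gmat_wf_def gmat_elem_def)

lemma gmat_elem_in_gl: "r < p + q \<Longrightarrow> c < p + q \<Longrightarrow> ghomog (same_parity p r c) a \<Longrightarrow> gmat_elem r c a \<in> gl p q"
  unfolding gl_def even_gmat_iff by (auto simp: gmat_elem_def)

definition gmat_zero :: gmat where "gmat_zero = (\<lambda>_ _. gzero)"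

lemma gmat_mult_zero_left: "gmat_mult n gmat_zero B = gmat_zero"
  by (intro ext) (auto simp: gmat_mult_def gmat_zero_def gzero_def)

lemma gexp_square_zero:
  assumes X: "gmat_wf (p + q) X" and XX: "gmat_mult (p + q) X X = gmat_zero"
  shows "gexp p q X = gmat_add (gmat_one (p + q)) X"
proof (intro ext)
  fix i j U
  let ?n = "p + q"
  have pw: "gmat_pow ?n X k = (if k = 0 then gmat_one ?n else if k = 1 then X else gmat_zero)" for k
  proof (cases k)
    case (Suc k')
    show ?thesis
    proof (cases k')
      case 0 thus ?thesis using Suc X by (simp add: gmat_pow_Suc gmat_mult_one_right)
    next
      case (Suc k'')
      have "gmat_pow ?n X k = gmat_mult ?n (gmat_mult ?n X X) (gmat_pow ?n X k'')"
        using \<open>k = Suc k'\<close> Suc by (simp add: gmat_pow_Suc gmat_mult_assoc)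
      thus ?thesis using XX \<open>k = Suc k'\<close> Suc by (simp add: gmat_mult_zero_left)
    qed
  qed simp
  have "(\<lambda>k. gmat_pow ?n X k i j U / of_nat (fact k)) =
        (\<lambda>k. (if k = 0 then gmat_one ?n i j U else 0) + (if k = 1 then X i j U else 0))"
    by (rule ext) (simp add: pw gmat_zero_def gzero_def)
  moreover have "(\<lambda>k. (if k = 0 then gmat_one ?n i j U else 0) + (if k = 1 then X i j U else 0)) sums
      (gmat_one ?n i j U + X i j U)"
    by (intro sums_add) (rule sums_single[of _ "\<lambda>_. _", simplified])+
  ultimately have "(\<lambda>k. gmat_pow ?n X k i j U / of_nat (fact k)) sums (gmat_one ?n i j U + X i j U)" by simp
  thus "gexp p q X i j U = gmat_add (gmat_one ?n) X i j U"
    using gexp_sums sums_unique2 unfolding gmat_add_def by metis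
qed

lemma gmat_elem_square:
  assumes "r < n" "c < n" "r \<noteq> c \<or> gmult a a = gzero"
  shows "gmat_mult n (gmat_elem r c a) (gmat_elem r c a) = gmat_zero"
proof -
  have "gmat_mult n (gmat_elem r c a) (gmat_elem r c a) = (\<lambda>k l. if k = r \<and> l < n then gmult a (gmat_elem r c a c l) else gzero)"
    by (rule gmat_mult_elem[OF assms(1,2)])
  also have "\<dots> = gmat_zero" using assms(3) by (auto simp: gmat_elem_def gmat_zero_def intro!: ext)
  finally show ?thesis .
qed

lemma gexp_gmat_elem_nilpotent:
  assumes "r < p + q" "c < p + q" "gfinite a" "r \<noteq> c \<or> gmult a a = gzero"
  shows "gexp p q (gmat_elem r c a) = gmat_add (gmat_one (p + q)) (gmat_elem r c a)"
  by (rule gexp_square_zero) (use assms in \<open>simp_all add: gmat_wf_elem gmat_elem_square\<close>)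

lemma gmat_pow_elem_diag:
  assumes j: "j < n"
  shows "gmat_pow n (gmat_elem j j (gconst x)) (Suc k) = gmat_elem j j (gconst (x ^ Suc k))"
proof (induction k)
  case 0 show ?case using j by (simp add: gmat_pow_Suc gmat_mult_one_right gmat_wf_elem)
next
  case (Suc k)
  have "gmat_pow n (gmat_elem j j (gconst x)) (Suc (Suc k)) = gmat_mult n (gmat_elem j j (gconst x)) (gmat_elem j j (gconst (x ^ Suc k)))"
    using Suc by (simp add: gmat_pow_Suc)
  also have "\<dots> = gmat_elem j j (gconst (x ^ Suc (Suc k)))"
    by (simp only: gmat_mult_elem[OF j j]) (use j in \<open>auto simp: gmat_elem_def gmult_gconst_gconst intro!: ext\<close>)
  finally show ?case .
qed

lemma exp_sums_complex: "(\<lambda>k. x ^ k / of_nat (fact k)) sums exp (x::complex)"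
proof -
  have "(\<lambda>k. x ^ k /\<^sub>R fact k) sums exp x" by (rule exp_converges)
  moreover have "(\<lambda>k. x ^ k /\<^sub>R fact k) = (\<lambda>k. x ^ k / of_nat (fact k))"
    by (rule ext) (simp add: scaleR_conv_of_real field_simps)
  ultimately show ?thesis by simp
qed

lemma gexp_gmat_elem_diag:
  assumes j: "j < p + q"
  shows "gexp p q (gmat_elem j j (gconst x)) = gmat_add (gmat_one (p + q)) (gmat_elem j j (gconst (exp x - 1)))"
proof (intro ext)
  fix k l U
  let ?n = "p + q"
  let ?X = "gmat_elem j j (gconst x)"
  show "gexp p q ?X k l U = gmat_add (gmat_one ?n) (gmat_elem j j (gconst (exp x - 1))) k l U"
  proof (cases "k = j \<and> l = j \<and> U = {}")
    case True
    have "(\<lambda>m. gmat_pow ?n ?X m k l U / of_nat (fact m)) = (\<lambda>m. x ^ m / of_nat (fact m))"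
    proof
      fix m show "gmat_pow ?n ?X m k l U / of_nat (fact m) = x ^ m / of_nat (fact m)"
        using True j by (cases m) (simp_all add: gmat_pow_elem_diag[OF j], simp_all add: gmat_one_def gone_def gmat_elem_def gconst_def)
    qed
    hence "gexp p q ?X k l U = exp x" using gexp_sums[of p q ?X k l U] exp_sums_complex sums_unique2 by metis
    thus ?thesis using True j by (simp add: gmat_add_def gmat_one_def gone_def gmat_elem_def gconst_def)
  next
    case False
    have "(\<lambda>m. gmat_pow ?n ?X m k l U / of_nat (fact m)) = (\<lambda>m. if m = 0 then gmat_one ?n k l U else 0)"
    proof
      fix m show "gmat_pow ?n ?X m k l U / of_nat (fact m) = (if m = 0 then gmat_one ?n k l U else 0)"
        using False by (cases m) (simp_all add: gmat_pow_elem_diag[OF j], auto simp: gmat_elem_def gconst_def gzero_def)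
    qed
    moreover have "(\<lambda>m. if m = 0 then gmat_one ?n k l U else 0) sums gmat_one ?n k l U"
      by (rule sums_single[of _ "\<lambda>_. _", simplified])
    ultimately have "gexp p q ?X k l U = gmat_one ?n k l U" using gexp_sums[of p q ?X k l U] sums_unique2 by metis
    thus ?thesis using False by (auto simp: gmat_add_def gmat_elem_def gconst_def gzero_def)
  qed
qed

lemma GLgrp_carrier_even: "A \<in> carrier (GLgrp p q) \<Longrightarrow> even_gmat p q A"
  by (simp add: GLgrp_def GLset_def)

definition exp_generated :: "nat \<Rightarrow> nat \<Rightarrow> gmat set" where
  "exp_generated p q = generate (GLgrp p q) (gexp p q ` gl p q)"

lemma GLgrp_mult: "x \<otimes>\<^bsub>GLgrp p q\<^esub> y = gmat_mult (p + q) x y"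
  by (simp add: GLgrp_def)

lemma one_in_exp_generated: "gmat_one (p + q) \<in> exp_generated p q"
  using generate.one[of "GLgrp p q" "gexp p q ` gl p q"] by (simp add: exp_generated_def GLgrp_def)

lemma exp_generated_cancel_left:
  assumes Y: "Y \<in> gl p q" and A: "A \<in> carrier (GLgrp p q)"
    and M: "gexp p q Y \<otimes>\<^bsub>GLgrp p q\<^esub> A \<in> exp_generated p q"
  shows "A \<in> exp_generated p q"
proof -
  interpret grp: group "GLgrp p q" by (rule group_GLgrp)
  have E: "gexp p q Y \<in> carrier (GLgrp p q)" by (rule gexp_in_GL[OF Y])
  have "inv\<^bsub>GLgrp p q\<^esub> (gexp p q Y) \<in> exp_generated p q"
    unfolding exp_generated_def by (rule generate.inv) (use Y in blast)
  from this M have "inv\<^bsub>GLgrp p q\<^esub> (gexp p q Y) \<otimes>\<^bsub>GLgrp p q\<^esub> (gexp p q Y \<otimes>\<^bsub>GLgrp p q\<^esub> A)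
                 \<in> exp_generated p q"
    unfolding exp_generated_def by (rule generate.eng)
  also have "inv\<^bsub>GLgrp p q\<^esub> (gexp p q Y) \<otimes>\<^bsub>GLgrp p q\<^esub> (gexp p q Y \<otimes>\<^bsub>GLgrp p q\<^esub> A) = A"
    using E A by (simp add: grp.m_assoc[symmetric])
  finally show ?thesis .
qed

definition gmat_row_add :: "nat \<Rightarrow> nat \<Rightarrow> nat \<Rightarrow> grass \<Rightarrow> gmat \<Rightarrow> gmat" where
  "gmat_row_add n r c a A = gmat_add A (gmat_mult n (gmat_elem r c a) A)"

lemma gmat_row_add_entry:
  assumes "r < n" "c < n"
  shows "gmat_row_add n r c a A k l U = A k l U + (if k = r \<and> l < n then gmult a (A c l) U else 0)"
  using assms by (simp add: gmat_row_add_def gmat_mult_elem gmat_add_def gzero_def)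

lemma gmat_row_add_body:
  assumes "r < n" "c < n"
  shows "gmat_row_add n r c a A k l {} = A k l {} + (if k = r \<and> l < n then a {} * A c l {} else 0)"
  by (simp add: gmat_row_add_entry[OF assms])

lemma gexp_row_add:
  assumes Y: "Y \<in> gl p q" and eY: "gexp p q Y = gmat_add (gmat_one (p + q)) (gmat_elem r c a)"
    and A: "A \<in> carrier (GLgrp p q)"
  shows "gmat_row_add (p + q) r c a A \<in> carrier (GLgrp p q)"
    and "gmat_row_add (p + q) r c a A \<in> exp_generated p q \<Longrightarrow> A \<in> exp_generated p q"
proof -
  interpret grp: group "GLgrp p q" by (rule group_GLgrp)
  have "gmat_wf (p + q) A" using A by (simp add: GLgrp_carrier_even even_gmat_wf)
  hence eq: "gexp p q Y \<otimes>\<^bsub>GLgrp p q\<^esub> A = gmat_row_add (p + q) r c a A"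
    by (simp add: GLgrp_mult eY gmat_row_add_def gmat_mult_add_left gmat_mult_one_left)
  show "gmat_row_add (p + q) r c a A \<in> carrier (GLgrp p q)"
    using grp.m_closed[OF gexp_in_GL[OF Y] A] by (simp only: eq)
  show "A \<in> exp_generated p q" if "gmat_row_add (p + q) r c a A \<in> exp_generated p q"
    by (rule exp_generated_cancel_left[OF Y A]) (simp only: eq that)
qed

lemma nilpotent_row_add:
  assumes r: "r < p + q" and c: "c < p + q" and a: "ghomog (same_parity p r c) a"
    and nil: "r \<noteq> c \<or> gmult a a = gzero" and A: "A \<in> carrier (GLgrp p q)"
  shows "gmat_row_add (p + q) r c a A \<in> carrier (GLgrp p q)"
    and "gmat_row_add (p + q) r c a A \<in> exp_generated p q \<Longrightarrow> A \<in> exp_generated p q"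
  using gexp_row_add[OF gmat_elem_in_gl[OF r c a]
      gexp_gmat_elem_nilpotent[OF r c ghomog_gfinite[OF a] nil] A] by blast+

lemma diagonal_row_add:
  assumes j: "j < p + q" and A: "A \<in> carrier (GLgrp p q)"
  shows "gmat_row_add (p + q) j j (gconst (exp z - 1)) A \<in> carrier (GLgrp p q)"
    and "gmat_row_add (p + q) j j (gconst (exp z - 1)) A \<in> exp_generated p q \<Longrightarrow> A \<in> exp_generated p q"
proof -
  have "gmat_elem j j (gconst z) \<in> gl p q"
    by (rule gmat_elem_in_gl[OF j j]) (simp add: same_parity_def)
  from gexp_row_add[OF this gexp_gmat_elem_diag[OF j] A]
  show "gmat_row_add (p + q) j j (gconst (exp z - 1)) A \<in> carrier (GLgrp p q)"
    and "gmat_row_add (p + q) j j (gconst (exp z - 1)) A \<in> exp_generated p q \<Longrightarrow> A \<in> exp_generated p q"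
    by blast+
qed

section \<open>Clearing the nilpotent part\<close>

definition gmonom :: "nat set \<Rightarrow> complex \<Rightarrow> grass" where
  "gmonom S x = (\<lambda>T. if T = S then x else 0)"

lemma gmult_gmonom:
  "gmult (gmonom S x) b T = (if finite T \<and> S \<subseteq> T then gsign S (T - S) * x * b (T - S) else 0)"
proof (cases "finite T")
  case True
  have "gmult (gmonom S x) b T = (\<Sum>R\<in>Pow T. if R = S then gsign S (T - S) * x * b (T - S) else 0)"
    unfolding gmult_finite[OF True] gmonom_def by (intro sum.cong) auto
  also have "\<dots> = (if S \<in> Pow T then gsign S (T - S) * x * b (T - S) else 0)"
    using True by (simp add: sum.delta)
  finally show ?thesis using True by simp
qed (simp add: gmult_infinite)

lemma gmonom_square: "S \<noteq> {} \<Longrightarrow> gmult (gmonom S x) (gmonom S x) = gzero"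
proof
  fix T assume "S \<noteq> {}"
  hence "\<not> (S \<subseteq> T \<and> T - S = S)" by blast
  thus "gmult (gmonom S x) (gmonom S x) T = gzero T"
    unfolding gmult_gmonom by (auto simp: gmonom_def gzero_def)
qed

lemma ghomog_gmonom: "finite S \<Longrightarrow> even (card S) = e \<Longrightarrow> ghomog e (gmonom S x)"
proof -
  assume fS: "finite S" and e: "even (card S) = e"
  have "{T. gmonom S x T \<noteq> 0} \<subseteq> {S}" by (auto simp: gmonom_def)
  hence "finite {T. gmonom S x T \<noteq> 0}" using finite_subset by blast
  thus ?thesis using fS e by (auto simp: ghomog_def grass_elems_def gmonom_def)
qed

lemma gmat_one_nonzeroD: "gmat_one n i j S \<noteq> 0 \<Longrightarrow> S = {} \<and> i = j \<and> i < n"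
  by (auto simp: gmat_one_def gone_def gzero_def split: if_splits)

lemma gmat_one_empty: "i < n \<Longrightarrow> j < n \<Longrightarrow> gmat_one n i j {} = (if i = j then 1 else 0)"
  by (auto simp: gmat_one_def gone_def gzero_def)

definition one_below_degree :: "nat \<Rightarrow> nat \<Rightarrow> gmat \<Rightarrow> bool" where
  "one_below_degree n d A \<longleftrightarrow> (\<forall>i j S. card S < d \<longrightarrow> A i j S = gmat_one n i j S)"

definition higher_order_generated :: "nat \<Rightarrow> nat \<Rightarrow> nat set \<Rightarrow> nat \<Rightarrow> bool" where
  "higher_order_generated p q F d \<longleftrightarrow> (\<forall>A \<in> carrier (GLgrp p q).
      gmat_support_in F A \<and> one_below_degree (p + q) d A \<longrightarrow> A \<in> exp_generated p q)"

definition order_defects :: "nat \<Rightarrow> nat \<Rightarrow> nat set \<Rightarrow> nat \<Rightarrow> gmat \<Rightarrow> (nat \<times> nat \<times> nat set) set" where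
  "order_defects p q F d A =
     {(i, j, S). i < p + q \<and> j < p + q \<and> S \<subseteq> F \<and> card S = d \<and> A i j S \<noteq> 0}"

lemma finite_order_defects: "finite F \<Longrightarrow> finite (order_defects p q F d A)"
  by (rule finite_subset[of _ "{..<p+q} \<times> {..<p+q} \<times> Pow F"]) (auto simp: order_defects_def)

lemma higher_order_generated_top:
  assumes F: "finite F"
  shows "higher_order_generated p q F (card F + 1)"
  unfolding higher_order_generated_def
proof (intro ballI impI, elim conjE)
  fix A assume supp: "gmat_support_in F A" and low: "one_below_degree (p + q) (card F + 1) A"
  have "A i j T = gmat_one (p + q) i j T" for i j T
  proof (cases "T \<subseteq> F")
    case True
    hence "card T \<le> card F" using F by (rule card_mono[rotated])
    thus ?thesis using low by (simp add: one_below_degree_def)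
  next
    case False
    hence "A i j T = 0" using supp by (auto simp: gmat_support_in_def)
    moreover have "gmat_one (p + q) i j T = 0" using False gmat_one_nonzeroD by blast
    ultimately show ?thesis by simp
  qed
  hence "A = gmat_one (p + q)" by blast
  thus "A \<in> exp_generated p q" using one_in_exp_generated by simp
qed

text \<open>Adding \<open>-c e_S\<close> times row \<open>j\<close> to row \<open>i\<close> kills the degree-\<open>d\<close> coefficient \<open>c\<close> of
  \<open>e_S\<close> in entry \<open>(i, j)\<close>: the pivot \<open>A j j\<close> has body 1, every other entry of row \<open>j\<close> has
  body 0, and all other coefficients of degree at most \<open>d\<close> are left unchanged.\<close>

lemma gmat_row_add_gmonom_clears:
  assumes i: "i < n" and j: "j < n" and d: "1 \<le> d" and S: "finite S" "card S = d"
    and low: "one_below_degree n d A"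
  defines "A' \<equiv> gmat_row_add n i j (gmonom S (- A i j S)) A"
  shows "A' i j S = 0"
    and "card T \<le> d \<Longrightarrow> (k, l, T) \<noteq> (i, j, S) \<Longrightarrow> A' k l T = A k l T"
    and "gmat_support_in F A \<Longrightarrow> S \<subseteq> F \<Longrightarrow> gmat_support_in F A'"
proof -
  have ent: "A' k l T = A k l T + (if k = i \<and> l < n \<and> finite T \<and> S \<subseteq> T
                                    then gsign S (T - S) * (- A i j S) * A j l (T - S) else 0)" for k l T
    unfolding A'_def gmat_row_add_entry[OF i j] gmult_gmonom by auto
  have body_row_j: "A j l {} = (if l = j then 1 else 0)" if "l < n" for l
    using low d j that by (simp add: one_below_degree_def gmat_one_empty)
  show "A' i j S = 0" using ent[of i j S] S j body_row_j by simp
  show "A' k l T = A k l T" if "card T \<le> d" "(k, l, T) \<noteq> (i, j, S)"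
  proof (cases "k = i \<and> l < n \<and> finite T \<and> S \<subseteq> T")
    case True
    hence "card S \<le> card T" using card_mono by blast
    hence "T = S" using card_subset_eq[of T S] True that(1) S(2) by simp
    thus ?thesis using ent[of k l T] True that(2) body_row_j by auto
  qed (use ent in auto)
  show "gmat_support_in F A'" if supp: "gmat_support_in F A" and SF: "S \<subseteq> F"
    unfolding gmat_support_in_def
  proof (intro allI impI)
    fix k l T assume "A' k l T \<noteq> 0"
    hence "A k l T \<noteq> 0 \<or> (S \<subseteq> T \<and> A j l (T - S) \<noteq> 0)"
      using ent[of k l T] by (auto split: if_splits)
    thus "T \<subseteq> F" using supp SF unfolding gmat_support_in_def by blast
  qed
qed

lemma clear_order_defect:
  assumes F: "finite F" and d: "1 \<le> d" and A: "A \<in> carrier (GLgrp p q)"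
    and supp: "gmat_support_in F A" and low: "one_below_degree (p + q) d A"
    and defect: "(i, j, S) \<in> order_defects p q F d A"
  obtains A' where "A' \<in> carrier (GLgrp p q)" "gmat_support_in F A'" "one_below_degree (p + q) d A'"
    "order_defects p q F d A' \<subset> order_defects p q F d A"
    "A' \<in> exp_generated p q \<Longrightarrow> A \<in> exp_generated p q"
proof -
  let ?n = "p + q"
  from defect have i: "i < ?n" and j: "j < ?n" and SF: "S \<subseteq> F" and cS: "card S = d"
    and nz: "A i j S \<noteq> 0"
    by (auto simp: order_defects_def)
  have fS: "finite S" using SF F finite_subset by blast
  have Sne: "S \<noteq> {}" using cS d by auto
  have "even (card S) = same_parity p i j"
    using even_gmat_ghomog[OF GLgrp_carrier_even[OF A] i j] nz unfolding ghomog_def by blast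
  hence hom: "ghomog (same_parity p i j) (gmonom S (- A i j S))" by (rule ghomog_gmonom[OF fS])
  define A' where "A' = gmat_row_add ?n i j (gmonom S (- A i j S)) A"
  note row_add = nilpotent_row_add[OF i j hom _ A, folded A'_def]
  note clears = gmat_row_add_gmonom_clears[OF i j d fS cS low, folded A'_def]
  show thesis
  proof
    show "A' \<in> carrier (GLgrp p q)" by (rule row_add(1)) (use gmonom_square[OF Sne] in blast)
    show "A' \<in> exp_generated p q \<Longrightarrow> A \<in> exp_generated p q"
      by (rule row_add(2)) (use gmonom_square[OF Sne] in blast)+
    show "gmat_support_in F A'" by (rule clears(3)[OF supp SF])
    show "one_below_degree ?n d A'"
      unfolding one_below_degree_def
    proof (intro allI impI)
      fix k l and T :: "nat set" assume T: "card T < d"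
      hence "A' k l T = A k l T" using cS by (intro clears(2)) auto
      thus "A' k l T = gmat_one ?n k l T" using low T by (simp add: one_below_degree_def)
    qed
    have "order_defects p q F d A' \<subseteq> order_defects p q F d A - {(i, j, S)}"
    proof
      fix x assume x: "x \<in> order_defects p q F d A'"
      obtain k l T where xe: "x = (k, l, T)" by (cases x)
      have ne: "x \<noteq> (i, j, S)" using x clears(1) by (auto simp: order_defects_def)
      hence "A' k l T = A k l T" using x xe by (intro clears(2)) (auto simp: order_defects_def)
      thus "x \<in> order_defects p q F d A - {(i, j, S)}"
        using x xe ne by (auto simp: order_defects_def)
    qed
    thus "order_defects p q F d A' \<subset> order_defects p q F d A" using defect by blast
  qed
qed

lemma one_below_degree_Suc:
  assumes Ae: "even_gmat p q A" and d: "1 \<le> d" and supp: "gmat_support_in F A"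
    and low: "one_below_degree (p + q) d A" and no_defects: "order_defects p q F d A = {}"
  shows "one_below_degree (p + q) (Suc d) A"
  unfolding one_below_degree_def
proof (intro allI impI)
  fix i j and S :: "nat set" assume "card S < Suc d"
  show "A i j S = gmat_one (p + q) i j S"
  proof (cases "card S < d")
    case True thus ?thesis using low by (simp add: one_below_degree_def)
  next
    case False
    hence cS: "card S = d" using \<open>card S < Suc d\<close> by simp
    hence "S \<noteq> {}" using d by auto
    hence one: "gmat_one (p + q) i j S = 0" using gmat_one_nonzeroD by blast
    have "A i j S = 0"
    proof (rule ccontr)
      assume nz: "A i j S \<noteq> 0"
      hence "i < p + q \<and> j < p + q" by (rule even_gmat_nonzeroD[OF Ae])
      moreover have "S \<subseteq> F" using nz supp by (simp add: gmat_support_in_def)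
      ultimately have "(i, j, S) \<in> order_defects p q F d A"
        using nz cS by (simp add: order_defects_def)
      thus False using no_defects by simp
    qed
    thus ?thesis using one by simp
  qed
qed

lemma higher_order_generated_step:
  assumes F: "finite F" and d: "1 \<le> d" and IH: "higher_order_generated p q F (Suc d)"
  shows "higher_order_generated p q F d"
  unfolding higher_order_generated_def
proof (intro ballI impI, elim conjE)
  fix A assume "A \<in> carrier (GLgrp p q)" "gmat_support_in F A" "one_below_degree (p + q) d A"
  thus "A \<in> exp_generated p q"
  proof (induction "card (order_defects p q F d A)" arbitrary: A rule: less_induct)
    case less
    show ?case
    proof (cases "order_defects p q F d A = {}")
      case True
      hence "one_below_degree (p + q) (Suc d) A"
        using one_below_degree_Suc[OF GLgrp_carrier_even[OF less.prems(1)] d less.prems(2,3)] by blast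
      thus ?thesis using IH less.prems unfolding higher_order_generated_def by blast
    next
      case False
      then obtain i j S where "(i, j, S) \<in> order_defects p q F d A" by auto
      then obtain A' where
        A': "A' \<in> carrier (GLgrp p q)" "gmat_support_in F A'" "one_below_degree (p + q) d A'"
          "order_defects p q F d A' \<subset> order_defects p q F d A"
        and reflect: "A' \<in> exp_generated p q \<Longrightarrow> A \<in> exp_generated p q"
        using clear_order_defect[OF F d less.prems] by blast
      have "card (order_defects p q F d A') < card (order_defects p q F d A)"
        by (rule psubset_card_mono[OF finite_order_defects[OF F] A'(4)])
      thus ?thesis using reflect less.hyps[OF _ A'(1-3)] by blast
    qed
  qed
qed

lemma higher_order_generated_all:
  assumes F: "finite F" and d: "1 \<le> d" "d \<le> card F + 1"
  shows "higher_order_generated p q F d"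
  using d(2)
proof (induction rule: inc_induct)
  case base show ?case by (rule higher_order_generated_top[OF F])
next
  case (step m)
  have "1 \<le> m" using d(1) step.hyps(1) by simp
  thus ?case by (rule higher_order_generated_step[OF F _ step.IH])
qed

section \<open>Gaussian elimination on the body\<close>

definition body_id_cols :: "nat \<Rightarrow> nat \<Rightarrow> gmat \<Rightarrow> bool" where
  "body_id_cols n j A \<longleftrightarrow> (\<forall>c<j. \<forall>r<n. A r c {} = (if r = c then 1 else 0))"

definition columns_generated :: "nat \<Rightarrow> nat \<Rightarrow> nat \<Rightarrow> bool" where
  "columns_generated p q j \<longleftrightarrow>
     (\<forall>A \<in> carrier (GLgrp p q). body_id_cols (p + q) j A \<longrightarrow> A \<in> exp_generated p q)"

lemma body_id_cols_row_add:
  assumes "body_id_cols n j A" "r < n" "c < n" "j \<le> c"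
  shows "body_id_cols n j (gmat_row_add n r c a A)"
  using assms by (auto simp: body_id_cols_def gmat_row_add_body)

lemma body_id_cols_Suc:
  assumes "body_id_cols n j A" "A j j {} = 1" "\<forall>r<n. r \<noteq> j \<longrightarrow> A r j {} = 0"
  shows "body_id_cols n (Suc j) A"
  using assms by (auto simp: body_id_cols_def less_Suc_eq)

lemma one_below_degree_1:
  assumes Ae: "even_gmat p q A" and body: "body_id_cols (p + q) (p + q) A"
  shows "one_below_degree (p + q) 1 A"
  unfolding one_below_degree_def
proof (intro allI impI)
  fix i j and S :: "nat set" assume "card S < 1"
  hence "S = {} \<or> infinite S" by auto
  thus "A i j S = gmat_one (p + q) i j S"
  proof
    assume S: "S = {}"
    show ?thesis
    proof (cases "i < p + q \<and> j < p + q")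
      case True thus ?thesis using body S by (simp add: body_id_cols_def gmat_one_empty)
    next
      case False
      hence "A i j = gzero" by (rule even_gmat_outside[OF Ae])
      thus ?thesis using False by (auto simp: gmat_one_def)
    qed
  next
    assume S: "infinite S"
    have "A i j S = 0" using even_gmat_wf[OF Ae] S by (simp add: gmat_wf_def gfinite_def)
    moreover have "gmat_one (p + q) i j S = 0" using S gmat_one_nonzeroD by fastforce
    ultimately show ?thesis by simp
  qed
qed

lemma columns_generated_all: "columns_generated p q (p + q)"
  unfolding columns_generated_def
proof (intro ballI impI)
  fix A assume A: "A \<in> carrier (GLgrp p q)" and body: "body_id_cols (p + q) (p + q) A"
  have Ae: "even_gmat p q A" using A by (rule GLgrp_carrier_even)
  have "higher_order_generated p q (gmat_generators (p + q) A) 1"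
    by (rule higher_order_generated_all[OF finite_gmat_generators[OF Ae]]) simp_all
  thus "A \<in> exp_generated p q"
    using A gmat_support_in_generators[OF Ae] one_below_degree_1[OF Ae body]
    unfolding higher_order_generated_def by blast
qed

lemma ghomog_body_nonzeroD: "ghomog e a \<Longrightarrow> a {} \<noteq> 0 \<Longrightarrow> e"
  unfolding ghomog_def by (metis card.empty even_zero)

lemma column_clear_off_diag:
  assumes j: "j < p + q" and IH: "columns_generated p q (Suc j)"
    and A: "A \<in> carrier (GLgrp p q)" and body: "body_id_cols (p + q) j A" and pivot: "A j j {} = 1"
  shows "A \<in> exp_generated p q"
  using A body pivot
proof (induction "card {r. r < p + q \<and> r \<noteq> j \<and> A r j {} \<noteq> 0}" arbitrary: A rule: less_induct)
  case less
  let ?n = "p + q"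
  let ?R = "\<lambda>B. {r. r < ?n \<and> r \<noteq> j \<and> B r j {} \<noteq> 0}"
  show ?case
  proof (cases "?R A = {}")
    case True
    hence "body_id_cols ?n (Suc j) A" using less.prems by (intro body_id_cols_Suc) auto
    thus ?thesis using IH less.prems(1) unfolding columns_generated_def by blast
  next
    case False
    then obtain r where r: "r < ?n" "r \<noteq> j" and x: "A r j {} \<noteq> 0" by blast
    have "same_parity p r j"
      using even_gmat_ghomog[OF GLgrp_carrier_even[OF less.prems(1)] r(1) j] x
      by (rule ghomog_body_nonzeroD)
    hence hom: "ghomog (same_parity p r j) (gconst (- A r j {}))" by simp
    define A' where "A' = gmat_row_add ?n r j (gconst (- A r j {})) A"
    note row_add = nilpotent_row_add[OF r(1) j hom _ less.prems(1), folded A'_def]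
    have ent: "A' k j {} = A k j {} + (if k = r then - A r j {} * A j j {} else 0)" for k
      unfolding A'_def gmat_row_add_body[OF r(1) j] using j by (simp add: gconst_def)
    have "?R A' \<subset> ?R A"
      using ent r x less.prems(3) by auto
    hence "card (?R A') < card (?R A)" by (rule psubset_card_mono[rotated]) simp
    moreover have "body_id_cols ?n j A'"
      unfolding A'_def by (rule body_id_cols_row_add[OF less.prems(2) r(1) j order_refl])
    moreover have "A' j j {} = 1" using ent[of j] r(2) less.prems(3) by simp
    ultimately have "A' \<in> exp_generated p q"
      using less.hyps[OF _ row_add(1)] r(2) by blast
    thus ?thesis using row_add(2) r(2) by blast
  qed
qed

lemma complex_exp_surj:
  fixes a :: complex assumes "a \<noteq> 0" shows "\<exists>z. exp z = a"
proof
  let ?z = "Complex (ln (cmod a)) (Arg a)"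
  have "exp ?z = of_real (exp (ln (cmod a))) * cis (Arg a)" by (simp add: exp_eq_polar)
  also have "\<dots> = rcis (cmod a) (Arg a)" using assms by (simp add: rcis_def)
  also have "\<dots> = a" by (rule rcis_cmod_Arg)
  finally show "exp ?z = a" .
qed

lemma column_normalize_pivot:
  assumes j: "j < p + q" and IH: "columns_generated p q (Suc j)"
    and A: "A \<in> carrier (GLgrp p q)" and body: "body_id_cols (p + q) j A" and a: "A j j {} \<noteq> 0"
  shows "A \<in> exp_generated p q"
proof -
  obtain z where z: "exp z = inverse (A j j {})" using complex_exp_surj a by (metis inverse_nonzero_iff_nonzero)
  define A' where "A' = gmat_row_add (p + q) j j (gconst (exp z - 1)) A"
  note row_add = diagonal_row_add[OF j A, of z, folded A'_def]
  have "A' j j {} = A j j {} + (exp z - 1) * A j j {}"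
    unfolding A'_def gmat_row_add_body[OF j j] using j by (simp add: gconst_def)
  also have "\<dots> = 1" using z a by (simp add: field_simps)
  finally have "A' j j {} = 1" .
  moreover have "body_id_cols (p + q) j A'"
    unfolding A'_def by (rule body_id_cols_row_add[OF body j j order_refl])
  ultimately have "A' \<in> exp_generated p q"
    by (rule column_clear_off_diag[OF j IH row_add(1), rotated])
  thus ?thesis by (rule row_add(2))
qed

lemma gmat_body_left_inverse_kernel:
  assumes BA: "gmat_mult n B A = gmat_one n" and Av: "\<And>l. l < n \<Longrightarrow> (\<Sum>c<n. A l c {} * v c) = 0"
    and j: "j < n"
  shows "v j = 0"
proof -
  have "v j = (\<Sum>c<n. if j = c then v c else 0)" using j by simp
  also have "\<dots> = (\<Sum>c<n. gmat_mult n B A j c {} * v c)"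
    using j by (intro sum.cong refl) (simp add: BA gmat_one_empty)
  also have "\<dots> = (\<Sum>c<n. \<Sum>l<n. B j l {} * A l c {} * v c)"
    using j by (simp add: gmat_mult_body sum_distrib_right)
  also have "\<dots> = (\<Sum>l<n. \<Sum>c<n. B j l {} * A l c {} * v c)" by (rule sum.swap)
  also have "\<dots> = (\<Sum>l<n. B j l {} * (\<Sum>c<n. A l c {} * v c))"
    by (simp add: sum_distrib_left mult.assoc)
  also have "\<dots> = 0" using Av by simp
  finally show ?thesis .
qed

text \<open>If the body of column \<open>j\<close> vanished on and below the diagonal, the body of \<open>A\<close> would
  have a nonzero kernel vector, contradicting invertibility.\<close>

lemma body_pivot_exists:
  assumes A: "A \<in> carrier (GLgrp p q)" and j: "j < p + q" and body: "body_id_cols (p + q) j A"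
  shows "\<exists>i. j \<le> i \<and> i < p + q \<and> A i j {} \<noteq> 0"
proof (rule ccontr)
  let ?n = "p + q"
  assume "\<not> ?thesis"
  hence z: "A i j {} = 0" if "j \<le> i" "i < ?n" for i using that by blast
  obtain B where B: "gmat_mult ?n B A = gmat_one ?n" using A by (auto simp: GLgrp_def GLset_def)
  define v where "v c = (if c < j then - A c j {} else if c = j then 1 else 0)" for c
  have "(\<Sum>c<?n. A l c {} * v c) = 0" if l: "l < ?n" for l
  proof -
    have "(\<Sum>c<?n. A l c {} * v c)
        = (\<Sum>c<?n. (if c = l \<and> l < j then - A l j {} else 0) + (if c = j then A l j {} else 0))"
    proof (rule sum.cong[OF refl])
      fix c assume "c \<in> {..<?n}"
      show "A l c {} * v c = (if c = l \<and> l < j then - A l j {} else 0) + (if c = j then A l j {} else 0)"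
      proof (cases "c < j")
        case True
        hence "A l c {} = (if l = c then 1 else 0)" using body l by (simp add: body_id_cols_def)
        thus ?thesis using True by (auto simp: v_def)
      qed (auto simp: v_def)
    qed
    also have "\<dots> = (if l < j then - A l j {} else 0) + A l j {}"
      using l j by (simp add: sum.distrib)
    also have "\<dots> = 0" using z l by (cases "l < j") auto
    finally show ?thesis .
  qed
  hence "v j = 0" by (rule gmat_body_left_inverse_kernel[OF B _ j])
  thus False by (simp add: v_def)
qed

lemma columns_generated_step:
  assumes j: "j < p + q" and IH: "columns_generated p q (Suc j)"
  shows "columns_generated p q j"
  unfolding columns_generated_def
proof (intro ballI impI)
  let ?n = "p + q"
  fix A assume A: "A \<in> carrier (GLgrp p q)" and body: "body_id_cols ?n j A"
  show "A \<in> exp_generated p q"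
  proof (cases "A j j {} = 0")
    case False thus ?thesis by (rule column_normalize_pivot[OF j IH A body])
  next
    case True
    obtain i where i: "j \<le> i" "i < ?n" and x: "A i j {} \<noteq> 0"
      using body_pivot_exists[OF A j body] by blast
    have "same_parity p i j"
      using even_gmat_ghomog[OF GLgrp_carrier_even[OF A] i(2) j] x by (rule ghomog_body_nonzeroD)
    hence hom: "ghomog (same_parity p j i) gone" by (simp add: same_parity_def)
    have "i \<noteq> j" using True x by auto
    define A' where "A' = gmat_row_add ?n j i gone A"
    note row_add = nilpotent_row_add[OF j i(2) hom _ A, folded A'_def]
    have "A' j j {} \<noteq> 0"
      unfolding A'_def gmat_row_add_body[OF j i(2)] using True x j by (simp add: gone_def)
    moreover have "body_id_cols ?n j A'"
      unfolding A'_def by (rule body_id_cols_row_add[OF body j i(2,1)])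
    ultimately have "A' \<in> exp_generated p q"
      by (intro column_normalize_pivot[OF j IH row_add(1)]) (use \<open>i \<noteq> j\<close> in auto)
    thus ?thesis using row_add(2) \<open>i \<noteq> j\<close> by blast
  qed
qed

lemma GL_subset_exp_generated: "carrier (GLgrp p q) \<subseteq> exp_generated p q"
proof -
  have "columns_generated p q (p + q - m)" for m
  proof (induction m)
    case 0 show ?case by (simp add: columns_generated_all)
  next
    case (Suc m)
    show ?case
    proof (cases "m < p + q")
      case True
      hence "Suc (p + q - Suc m) = p + q - m" by simp
      thus ?thesis using columns_generated_step[of "p + q - Suc m" p q] Suc True by simp
    qed (use Suc in simp)
  qed
  from this[of "p + q"] show ?thesis by (auto simp: columns_generated_def body_id_cols_def)
qed

theorem lemma2p6:
  fixes p q :: nat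
  shows "(\<forall>X \<in> gl p q. (\<forall>i j U. convergent (\<lambda>m. expsum p q X m i j U))
            \<and> gexp p q X \<in> carrier (GLgrp p q))
         \<and> generate (GLgrp p q) (gexp p q ` gl p q) = carrier (GLgrp p q)"
proof
  show "\<forall>X \<in> gl p q. (\<forall>i j U. convergent (\<lambda>m. expsum p q X m i j U)) \<and> gexp p q X \<in> carrier (GLgrp p q)"
    using expsum_convergent gexp_in_GL by blast
  have "gexp p q ` gl p q \<subseteq> carrier (GLgrp p q)" using gexp_in_GL by blast
  hence "generate (GLgrp p q) (gexp p q ` gl p q) \<subseteq> carrier (GLgrp p q)"
    using group.generate_in_carrier[OF group_GLgrp] by blast
  with GL_subset_exp_generated
  show "generate (GLgrp p q) (gexp p q ` gl p q) = carrier (GLgrp p q)"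
    unfolding exp_generated_def by blast
qed

end
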